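(* There exists a constant $C=C(Q)>0$ with the following property. Let $r>0$, $\sigma\in(0,1)$, and let $g:\partial D_{(1+\sigma)r}\to\mathcal A_Q(\mathbb R^2)$ and $f:\partial D_r\to\mathcal A_Q(\mathbb R^2)$ be Lipschitz with Lipschitz constants $L_g,L_f$. Then there exists a Lipschitz map $h:D_{(1+\sigma)r}\setminus D_r\to\mathcal A_Q(\mathbb R^2)$ with $h=g$ on $\partial D_{(1+\sigma)r}$, $h=f$ on $\partial D_r$, and Lipschitz constant $$L_h\le C\Big(L_f+L_g+\frac1{\sigma r}\sup_{x\in\partial D_r}\mathcal G\big(f(x),g((1+\sigma)x)\big)\Big).$$
   Context: $D_r=(-\tfrac r2,\tfrac r2)^2\subset\mathbb R^2$. $\mathcal A_Q(\mathbb R^2)$ is the space of unordered $Q$-tuples of points of $\mathbb R^2$ with metric $\mathcal G(\sum_i[x_i],\sum_i[y_i])=\min_\sigma(\sum_i|x_i-y_{\sigma(i)}|^2)^{1/2}$ over permutations $\sigma$. *)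

theory Defs
  imports "HOL-Analysis.Analysis" "HOL-Library.Multiset"
begin

type_synonym pt = "real \<times> real"

definition sqD :: "real \<Rightarrow> pt set" where
  "sqD r = {-r/2<..<r/2} \<times> {-r/2<..<r/2}"

text \<open>A_Q(R^2): unordered Q-tuples of points = multisets of size Q.\<close>
definition AQ :: "nat \<Rightarrow> pt multiset set" where
  "AQ Q = {T. size T = Q}"

definition GQ :: "pt multiset \<Rightarrow> pt multiset \<Rightarrow> real" where
  "GQ T S = (let xs = (SOME xs. mset xs = T); ys = (SOME ys. mset ys = S) in
     Min ((\<lambda>\<pi>. sqrt (\<Sum>i<length xs. (norm (xs ! i - ys ! (\<pi> i)))\<^sup>2))
          ` {\<pi>. \<pi> permutes {..<length xs}}))"

definition lipschitz_AQ :: "pt set \<Rightarrow> (pt \<Rightarrow> pt multiset) \<Rightarrow> real \<Rightarrow> bool" where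
  "lipschitz_AQ A h L \<longleftrightarrow> (\<forall>x\<in>A. \<forall>y\<in>A. GQ (h x) (h y) \<le> L * dist x y)"

end

theory Submission
  imports Defs
begin

definition enum_dist :: "pt list \<Rightarrow> pt list \<Rightarrow> real" where
  "enum_dist xs ys = L2_set (\<lambda>i. norm (xs ! i - ys ! i)) {..<length xs}"

lemma enum_dist_nonneg: "0 \<le> enum_dist xs ys"
  by (simp add: enum_dist_def L2_set_nonneg)

lemma enum_dist_permute_list:
  assumes "p permutes {..<length xs}" "length ys = length xs"
  shows "enum_dist (permute_list p xs) (permute_list p ys) = enum_dist xs ys"
proof -
  have "enum_dist (permute_list p xs) (permute_list p ys)
      = sqrt (\<Sum>i<length xs. (norm (xs ! p i - ys ! p i))\<^sup>2)"
    unfolding enum_dist_def L2_set_def using assms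
    by (intro arg_cong[where f=sqrt] sum.cong) (auto simp: permute_list_nth)
  also have "(\<Sum>i<length xs. (norm (xs ! p i - ys ! p i))\<^sup>2)
      = (\<Sum>i<length xs. (norm (xs ! i - ys ! i))\<^sup>2)"
    using sum.permute[OF assms(1), of "\<lambda>i. (norm (xs ! i - ys ! i))\<^sup>2"] by (simp add: o_def)
  finally show ?thesis by (simp add: enum_dist_def L2_set_def)
qed

lemma enum_dist_sym: "length ys = length xs \<Longrightarrow> enum_dist xs ys = enum_dist ys xs"
  unfolding enum_dist_def by (simp add: norm_minus_commute)

lemma enum_dist_triangle:
  assumes "length ys = length xs" "length zs = length xs"
  shows "enum_dist xs zs \<le> enum_dist xs ys + enum_dist ys zs"
proof -
  have "enum_dist xs zs
      \<le> L2_set (\<lambda>i. norm (xs ! i - ys ! i) + norm (ys ! i - zs ! i)) {..<length xs}"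
    unfolding enum_dist_def
    by (rule L2_set_mono) (metis diff_add_cancel add_diff_eq norm_triangle_ineq, simp)
  also have "\<dots> \<le> enum_dist xs ys + enum_dist ys zs"
    unfolding enum_dist_def using assms by (simp add: L2_set_triangle_ineq)
  finally show ?thesis .
qed

lemma norm_nth_le_enum_dist: "i < length xs \<Longrightarrow> norm (xs ! i - ys ! i) \<le> enum_dist xs ys"
  unfolding enum_dist_def by (rule member_le_L2_set) auto

lemma enum_dist_map_le:
  assumes "length ys = length xs" "0 \<le> c"
    "\<And>i. i < length xs \<Longrightarrow> norm (f (xs ! i) - g (ys ! i)) \<le> c * norm (xs ! i - ys ! i)"
  shows "enum_dist (map f xs) (map g ys) \<le> c * enum_dist xs ys"
proof -
  have "enum_dist (map f xs) (map g ys) \<le> L2_set (\<lambda>i. c * norm (xs ! i - ys ! i)) {..<length xs}"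
    unfolding enum_dist_def length_map using assms by (intro L2_set_mono) auto
  also have "\<dots> = c * enum_dist xs ys"
    unfolding enum_dist_def using L2_set_right_distrib[OF assms(2)] by metis
  finally show ?thesis .
qed

lemma mset_some_mset: "mset (SOME xs. mset xs = T) = T"
  by (rule someI_ex) (rule ex_mset)

lemma GQ_le_enum_dist:
  assumes "mset xs = T" "mset ys = S" "length ys = length xs"
  shows "GQ T S \<le> enum_dist xs ys"
proof -
  define x0 where "x0 = (SOME xs. mset xs = T)"
  define y0 where "y0 = (SOME xs. mset xs = S)"
  have x0: "mset x0 = T" and y0: "mset y0 = S" unfolding x0_def y0_def by (rule mset_some_mset)+
  have lx: "length x0 = length xs" using x0 assms(1) by (metis size_mset)
  have ly: "length y0 = length xs" using y0 assms(2,3) by (metis size_mset)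
  obtain p where p: "p permutes {..<length x0}" "permute_list p x0 = xs"
    using mset_eq_permutation[of xs x0] x0 assms(1) by auto
  define ys' where "ys' = permute_list (inv p) ys"
  have "permute_list p ys' = ys"
    unfolding ys'_def using permute_list_compose[of p ys "inv p"] p(1) lx assms(3)
    by (simp add: permutes_inv_o(2))
  then have "enum_dist xs ys = enum_dist x0 ys'"
    using p enum_dist_permute_list[OF p(1)] lx assms(3) by (metis length_permute_list ys'_def)
  have "mset ys' = mset y0" unfolding ys'_def using p(1) lx assms(2,3) y0 by (simp add: permutes_inv)
  then obtain q where q: "q permutes {..<length y0}" "permute_list q y0 = ys'"
    using mset_eq_permutation[of ys' y0] by auto
  have "enum_dist x0 ys' = sqrt (\<Sum>i<length x0. (norm (x0 ! i - y0 ! (q i)))\<^sup>2)"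
    unfolding enum_dist_def L2_set_def using q lx ly
    by (intro arg_cong[where f=sqrt] sum.cong) (auto simp: permute_list_nth)
  then have "GQ T S \<le> enum_dist x0 ys'"
    unfolding GQ_def x0_def[symmetric] y0_def[symmetric] Let_def using q lx ly
    by (intro Min_le) (auto intro: finite_permutations)
  then show ?thesis using \<open>enum_dist xs ys = enum_dist x0 ys'\<close> by simp
qed

lemma GQ_attained:
  assumes "mset xs = T" "size S = size T"
  shows "\<exists>ys. mset ys = S \<and> GQ T S = enum_dist xs ys"
proof -
  define x0 where "x0 = (SOME xs. mset xs = T)"
  define y0 where "y0 = (SOME xs. mset xs = S)"
  have x0: "mset x0 = T" and y0: "mset y0 = S" unfolding x0_def y0_def by (rule mset_some_mset)+
  have lx: "length x0 = length xs" using x0 assms(1) by (metis size_mset)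
  have ly: "length y0 = length xs" using y0 assms by (metis size_mset)
  define F where "F = (\<lambda>\<pi>. sqrt (\<Sum>i<length x0. (norm (x0 ! i - y0 ! (\<pi> i)))\<^sup>2))"
  have "Min (F ` {\<pi>. \<pi> permutes {..<length x0}}) \<in> F ` {\<pi>. \<pi> permutes {..<length x0}}"
    by (intro Min_in) (auto intro: finite_permutations exI[of _ id])
  then obtain \<pi> where \<pi>0: "\<pi> permutes {..<length x0}" and "GQ T S = F \<pi>"
    unfolding GQ_def x0_def y0_def Let_def F_def by auto
  have \<pi>: "\<pi> permutes {..<length y0}" using \<pi>0 lx ly by simp
  define z0 where "z0 = permute_list \<pi> y0"
  have "F \<pi> = enum_dist x0 z0" unfolding F_def enum_dist_def L2_set_def z0_def using \<pi> lx ly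
    by (intro arg_cong[where f=sqrt] sum.cong) (auto simp: permute_list_nth)
  obtain p where p: "p permutes {..<length x0}" "permute_list p x0 = xs"
    using mset_eq_permutation[of xs x0] x0 assms(1) by auto
  have lz: "length z0 = length x0" using lx ly z0_def by simp
  have "enum_dist xs (permute_list p z0) = enum_dist x0 z0"
    using enum_dist_permute_list[OF p(1) lz] p(2) by simp
  moreover have "mset (permute_list p z0) = S" using p(1) lz \<pi> y0 z0_def by simp
  ultimately show ?thesis using \<open>GQ T S = F \<pi>\<close> \<open>F \<pi> = enum_dist x0 z0\<close> by metis
qed

lemma GQ_optimal_enums:
  "size S = size T \<Longrightarrow> \<exists>xs ys. mset xs = T \<and> mset ys = S \<and> GQ T S = enum_dist xs ys"
  using GQ_attained ex_mset[of T] by blast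

lemma GQ_nonneg: "size S = size T \<Longrightarrow> 0 \<le> GQ T S"
  using GQ_optimal_enums[of S T] enum_dist_nonneg by metis

lemma GQ_self: "GQ T T = 0"
proof -
  obtain xs where xs: "mset xs = T" using ex_mset by blast
  have "GQ T T \<le> enum_dist xs xs" by (rule GQ_le_enum_dist[OF xs xs]) simp
  moreover have "enum_dist xs xs = 0" by (simp add: enum_dist_def L2_set_def)
  ultimately show ?thesis using GQ_nonneg[of T T] by simp
qed

lemma GQ_sym: "size S = size T \<Longrightarrow> GQ S T = GQ T S"
proof -
  have le: "GQ S T \<le> GQ T S" if sz: "size S = size T" for S T
  proof -
    obtain xs ys where h: "mset xs = T" "mset ys = S" "GQ T S = enum_dist xs ys"
      using GQ_optimal_enums[OF sz] by blast
    have "length ys = length xs" using h sz by (metis size_mset)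
    then show ?thesis using h GQ_le_enum_dist[OF h(2,1)] enum_dist_sym by simp
  qed
  show "size S = size T \<Longrightarrow> GQ S T = GQ T S" using le[of S T] le[of T S] by simp
qed

lemma GQ_triangle:
  assumes "size S = size T" "size U = size T"
  shows "GQ T U \<le> GQ T S + GQ S U"
proof -
  obtain xs ys where h: "mset xs = T" "mset ys = S" "GQ T S = enum_dist xs ys"
    using GQ_optimal_enums[OF assms(1)] by blast
  obtain zs where h2: "mset zs = U" "GQ S U = enum_dist ys zs"
    using GQ_attained[OF h(2)] assms by auto
  have l: "length ys = length xs" "length zs = length xs" using h h2 assms by (metis size_mset)+
  have "GQ T U \<le> enum_dist xs zs" by (rule GQ_le_enum_dist) (use h h2 l in auto)
  also have "\<dots> \<le> enum_dist xs ys + enum_dist ys zs" by (rule enum_dist_triangle[OF l])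
  finally show ?thesis using h h2 by simp
qed

lemma GQ_eq_0D:
  assumes "size S = size T" "GQ T S = 0"
  shows "T = S"
proof -
  obtain xs ys where h: "mset xs = T" "mset ys = S" "GQ T S = enum_dist xs ys"
    using GQ_optimal_enums[OF assms(1)] by blast
  have "length ys = length xs" using h assms by (metis size_mset)
  then have "xs = ys"
    using norm_nth_le_enum_dist[of _ xs ys] h assms(2) by (intro nth_equalityI) auto
  then show ?thesis using h by simp
qed

lemma GQ_image_mset_le:
  assumes "mset xs = T" "mset ys = S" "length ys = length xs"
  shows "GQ (image_mset f T) (image_mset g S) \<le> enum_dist (map f xs) (map g ys)"
  by (rule GQ_le_enum_dist) (use assms in \<open>auto simp: mset_map\<close>)

lemma GQ_close_point:
  assumes "size S = size T" "GQ S T \<le> M" "p \<in># S"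
  shows "\<exists>q. q \<in># T \<and> dist p q \<le> M"
proof -
  obtain xs ys where h: "mset xs = S" "mset ys = T" "GQ S T = enum_dist xs ys"
    using GQ_optimal_enums[of T S] assms(1) by auto
  have l: "length ys = length xs" using h assms by (metis size_mset)
  obtain i where i: "i < length xs" "p = xs ! i"
    using assms(3) h(1) by (metis in_set_conv_nth set_mset_mset)
  have "dist p (ys ! i) \<le> M"
    using norm_nth_le_enum_dist[OF i(1), of ys] h assms i by (simp add: dist_norm)
  moreover have "ys ! i \<in># T" using h(2) i l by (metis nth_mem set_mset_mset)
  ultimately show ?thesis by blast
qed

definition optimal_enums :: "pt multiset \<Rightarrow> pt multiset \<Rightarrow> pt list \<times> pt list" where
  "optimal_enums T S = (SOME (xs, ys). mset xs = T \<and> mset ys = S \<and> GQ T S = enum_dist xs ys)"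

definition AQ_geodesic :: "pt multiset \<Rightarrow> pt multiset \<Rightarrow> real \<Rightarrow> pt multiset" where
  "AQ_geodesic T S \<tau> = (case optimal_enums T S of (xs, ys) \<Rightarrow>
     mset (map2 (\<lambda>p q. p + \<tau> *\<^sub>R (q - p)) xs ys))"

context
  fixes T S :: "pt multiset"
  assumes size_eq: "size S = size T"
begin

lemma optimal_enums:
  obtains xs ys where "optimal_enums T S = (xs, ys)" "mset xs = T" "mset ys = S"
    "GQ T S = enum_dist xs ys" "length ys = length xs"
proof -
  have "\<exists>p. case p of (xs, ys) \<Rightarrow> mset xs = T \<and> mset ys = S \<and> GQ T S = enum_dist xs ys"
    using GQ_optimal_enums[OF size_eq] by auto
  from someI_ex[OF this] obtain xs ys where "optimal_enums T S = (xs, ys)"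
    "mset xs = T" "mset ys = S" "GQ T S = enum_dist xs ys"
    unfolding optimal_enums_def by (auto split: prod.splits)
  moreover have "length ys = length xs" using calculation size_eq by (metis size_mset)
  ultimately show ?thesis using that by blast
qed

lemma size_AQ_geodesic: "size (AQ_geodesic T S \<tau>) = size T"
  by (rule optimal_enums) (auto simp: AQ_geodesic_def)

lemma AQ_geodesic_0: "AQ_geodesic T S 0 = T"
proof (rule optimal_enums)
  fix xs ys assume opt: "optimal_enums T S = (xs, ys)" "mset xs = T" "length ys = length xs"
  have "map2 (\<lambda>p q. p + 0 *\<^sub>R (q - p)) xs ys = xs"
    using opt(3) by (intro nth_equalityI) auto
  then show ?thesis using opt unfolding AQ_geodesic_def by (simp only: prod.case)
qed

lemma AQ_geodesic_1: "AQ_geodesic T S 1 = S"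
proof (rule optimal_enums)
  fix xs ys assume opt: "optimal_enums T S = (xs, ys)" "mset ys = S" "length ys = length xs"
  have "map2 (\<lambda>p q. p + 1 *\<^sub>R (q - p)) xs ys = ys"
    using opt(3) by (intro nth_equalityI) auto
  then show ?thesis using opt unfolding AQ_geodesic_def by (simp only: prod.case)
qed

lemma GQ_AQ_geodesic: "GQ (AQ_geodesic T S \<tau>) (AQ_geodesic T S \<tau>') \<le> \<bar>\<tau> - \<tau>'\<bar> * GQ T S"
proof (rule optimal_enums)
  fix xs ys assume opt: "optimal_enums T S = (xs, ys)" "GQ T S = enum_dist xs ys"
    and l: "length ys = length xs"
  define seg where "seg t = map2 (\<lambda>p q. p + t *\<^sub>R (q - p)) xs ys" for t
  have "GQ (AQ_geodesic T S \<tau>) (AQ_geodesic T S \<tau>') \<le> enum_dist (seg \<tau>) (seg \<tau>')"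
    unfolding AQ_geodesic_def opt(1) seg_def[symmetric] by (rule GQ_le_enum_dist) (use l in \<open>auto simp: seg_def\<close>)
  also have "\<dots> = L2_set (\<lambda>i. \<bar>\<tau> - \<tau>'\<bar> * norm (xs ! i - ys ! i)) {..<length xs}"
  proof -
    have "norm (seg \<tau> ! i - seg \<tau>' ! i) = \<bar>\<tau> - \<tau>'\<bar> * norm (xs ! i - ys ! i)" if "i < length xs" for i
    proof -
      have "seg \<tau> ! i - seg \<tau>' ! i = (\<tau> - \<tau>') *\<^sub>R (ys ! i - xs ! i)"
        using that l by (simp add: seg_def algebra_simps)
      then show ?thesis by (simp add: norm_minus_commute)
    qed
    then show ?thesis unfolding enum_dist_def using l by (intro L2_set_cong) (auto simp: seg_def)
  qed
  also have "\<dots> = \<bar>\<tau> - \<tau>'\<bar> * GQ T S" unfolding opt(2) enum_dist_def by (simp add: L2_set_right_distrib)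
  finally show ?thesis .
qed

end

lemma dyadic_window_unique:
  fixes c d :: real
  assumes "0 < c" "c * 2 ^ k \<le> d" "d < 2 * (c * 2 ^ k)" "c * 2 ^ k' \<le> d" "d < 2 * (c * 2 ^ k')"
  shows "k = k'"
proof -
  have "\<not> Suc i \<le> j" if "c * 2 ^ i \<le> d" "d < 2 * (c * 2 ^ i)" "c * 2 ^ j \<le> d" for i j
  proof
    assume "Suc i \<le> j"
    then have "(2::real) ^ Suc i \<le> 2 ^ j" by (rule power_increasing) simp
    then have "2 * (c * 2 ^ i) \<le> c * 2 ^ j" using assms(1) by (simp add: mult.left_commute)
    then show False using that by linarith
  qed
  then show ?thesis using assms(2-5) by (meson not_less_eq_eq le_antisym)
qed

lemma exists_gap_scale:
  fixes P :: "'a::metric_space set" and c :: real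
  assumes "finite P" "card P \<le> Q" "0 < c"
  shows "\<exists>k\<le>Q * Q. \<forall>p\<in>P. \<forall>q\<in>P. \<not> (c * 2 ^ k \<le> dist p q \<and> dist p q < 2 * (c * 2 ^ k))"
proof -
  define D where "D = (\<lambda>(p, q). dist p q) ` (P \<times> P)"
  have "finite D" unfolding D_def using assms(1) by auto
  have "card D \<le> card (P \<times> P)" unfolding D_def by (rule card_image_le) (use assms(1) in auto)
  also have "\<dots> \<le> Q * Q" using assms(2) by (simp add: card_cartesian_product mult_le_mono)
  finally have card_D: "card D \<le> Q * Q" .
  define hit where "hit d = {k. k \<le> Q * Q \<and> c * 2 ^ k \<le> d \<and> d < 2 * (c * 2 ^ k)}" for d
  have "card (hit d) \<le> 1" for d
    using dyadic_window_unique[OF assms(3)] card_le_Suc0_iff_eq[of "hit d"] by (auto simp: hit_def)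
  then have "card (\<Union>d\<in>D. hit d) \<le> card D"
    using card_UN_le[OF \<open>finite D\<close>, of hit] sum_mono[of D "\<lambda>d. card (hit d)" "\<lambda>_. 1"] by simp
  then have "\<not> {..Q * Q} \<subseteq> (\<Union>d\<in>D. hit d)"
    using card_D card_mono[of "\<Union>d\<in>D. hit d" "{..Q * Q}"] \<open>finite D\<close> by (auto simp: hit_def)
  then obtain k where "k \<le> Q * Q" "\<forall>d\<in>D. k \<notin> hit d" by auto
  then show ?thesis unfolding D_def hit_def by auto
qed

definition gap_scale :: "pt multiset \<Rightarrow> real \<Rightarrow> real \<Rightarrow> bool" where
  "gap_scale T M s \<longleftrightarrow> 0 < M \<and> 5 * M \<le> s \<and> (\<forall>p\<in>#T. \<forall>q\<in>#T. \<not> (s \<le> dist p q \<and> dist p q < 2 * s))"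

definition cluster_point :: "pt multiset \<Rightarrow> real \<Rightarrow> real \<Rightarrow> pt \<Rightarrow> pt" where
  "cluster_point T M s p = (SOME q. q \<in># T \<and> dist p q < s + M)"

definition contract_to_cluster :: "pt multiset \<Rightarrow> real \<Rightarrow> real \<Rightarrow> real \<Rightarrow> pt \<Rightarrow> pt" where
  "contract_to_cluster T M s l p = cluster_point T M s p + l *\<^sub>R (p - cluster_point T M s p)"

context
  fixes T :: "pt multiset" and M s :: real
  assumes gap: "gap_scale T M s"
begin

lemma cluster_point:
  assumes "q \<in># T" "dist p q \<le> M"
  shows "cluster_point T M s p \<in># T" "dist p (cluster_point T M s p) < s + M"
proof -
  have "q \<in># T \<and> dist p q < s + M" using assms gap unfolding gap_scale_def by auto
  then have "cluster_point T M s p \<in># T \<and> dist p (cluster_point T M s p) < s + M"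
    unfolding cluster_point_def by (rule someI)
  then show "cluster_point T M s p \<in># T" "dist p (cluster_point T M s p) < s + M" by auto
qed

lemma cluster_point_eq:
  assumes "q \<in># T" "q' \<in># T" "dist p q \<le> M" "dist p' q' \<le> M" "dist p p' \<le> 2 * M"
  shows "cluster_point T M s p = cluster_point T M s p'"
proof -
  have gap': "dist z w < s" if "z \<in># T" "w \<in># T" "dist z w < 2 * s" for z w
    using gap that unfolding gap_scale_def by (meson not_le)
  have near: "dist p z < s + M \<longleftrightarrow> dist q z < s"
    if "z \<in># T" "q \<in># T" "dist p q \<le> M" for p q z
  proof
    assume "dist p z < s + M"
    then have "dist q z < 2 * s"
      using dist_triangle[of q z p] that(3) gap unfolding gap_scale_def by (simp add: dist_commute)
    then show "dist q z < s" using gap' that(1,2) by blast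
  next
    assume "dist q z < s"
    then show "dist p z < s + M" using dist_triangle[of p z q] that(3) by linarith
  qed
  have "dist q q' \<le> 4 * M"
    using dist_triangle[of q q' p] dist_triangle[of p q' p'] assms(3-5) by (simp add: dist_commute)
  then have qq': "dist q q' < s" using gap unfolding gap_scale_def by linarith
  have "dist q z < s \<longleftrightarrow> dist q' z < s" if "z \<in># T" for z
  proof
    assume "dist q z < s"
    then have "dist q' z < 2 * s" using dist_triangle[of q' z q] qq' by (simp add: dist_commute)
    then show "dist q' z < s" using gap' assms(2) that by blast
  next
    assume "dist q' z < s"
    then have "dist q z < 2 * s" using dist_triangle[of q z q'] qq' by (simp add: dist_commute)
    then show "dist q z < s" using gap' assms(1) that by blast
  qed
  then have "(\<lambda>z. z \<in># T \<and> dist p z < s + M) = (\<lambda>z. z \<in># T \<and> dist p' z < s + M)"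
    using near[OF _ assms(1,3)] near[OF _ assms(2,4)] by blast
  then show ?thesis unfolding cluster_point_def by simp
qed

lemma image_mset_cluster_point:
  assumes "size S = size T" "GQ S T \<le> M"
  shows "image_mset (cluster_point T M s) S = image_mset (cluster_point T M s) T"
proof -
  obtain xs ys where h: "mset xs = S" "mset ys = T" "GQ S T = enum_dist xs ys"
    using GQ_optimal_enums[of T S] assms(1) by auto
  have l: "length ys = length xs" using h assms by (metis size_mset)
  have "cluster_point T M s (xs ! i) = cluster_point T M s (ys ! i)" if i: "i < length xs" for i
  proof -
    have yi: "ys ! i \<in># T" using h(2) i l by (metis nth_mem set_mset_mset)
    have d: "dist (xs ! i) (ys ! i) \<le> M"
      using norm_nth_le_enum_dist[OF i, of ys] h assms(2) by (simp add: dist_norm)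
    show ?thesis using d gap by (intro cluster_point_eq[OF yi yi]) (auto simp: gap_scale_def)
  qed
  then have "map (cluster_point T M s) xs = map (cluster_point T M s) ys"
    using l by (intro nth_equalityI) auto
  then show ?thesis using h by (metis mset_map)
qed

lemma GQ_contract_to_cluster_param:
  assumes "size S = size T" "GQ S T \<le> M"
  shows "GQ (image_mset (contract_to_cluster T M s l) S) (image_mset (contract_to_cluster T M s l') S)
    \<le> \<bar>l - l'\<bar> * (size T * (s + M))"
proof -
  obtain xs where xs: "mset xs = S" using ex_mset by blast
  let ?\<psi> = "contract_to_cluster T M s"
  have "GQ (image_mset (?\<psi> l) S) (image_mset (?\<psi> l') S) \<le> enum_dist (map (?\<psi> l) xs) (map (?\<psi> l') xs)"
    by (rule GQ_image_mset_le[OF xs xs]) simp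
  also have "\<dots> \<le> (\<Sum>i<length xs. norm (map (?\<psi> l) xs ! i - map (?\<psi> l') xs ! i))"
    unfolding enum_dist_def length_map by (rule L2_set_le_sum) simp
  also have "\<dots> \<le> (\<Sum>i<length xs. \<bar>l - l'\<bar> * (s + M))"
  proof (rule sum_mono)
    fix i assume "i \<in> {..<length xs}"
    then have i: "i < length xs" by simp
    then have "xs ! i \<in># S" using xs by (metis nth_mem set_mset_mset)
    then obtain q where "q \<in># T" "dist (xs ! i) q \<le> M" using GQ_close_point[OF assms] by blast
    then have "dist (xs ! i) (cluster_point T M s (xs ! i)) \<le> s + M"
      using cluster_point(2) by fastforce
    moreover have "map (?\<psi> l) xs ! i - map (?\<psi> l') xs ! i
        = (l - l') *\<^sub>R (xs ! i - cluster_point T M s (xs ! i))"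
      using i by (simp add: contract_to_cluster_def algebra_simps)
    ultimately show "norm (map (?\<psi> l) xs ! i - map (?\<psi> l') xs ! i) \<le> \<bar>l - l'\<bar> * (s + M)"
      by (simp add: dist_norm mult_left_mono)
  qed
  also have "\<dots> = \<bar>l - l'\<bar> * (size T * (s + M))" using xs assms(1) by auto
  finally show ?thesis .
qed

lemma GQ_contract_to_cluster:
  assumes "size S = size T" "GQ S T \<le> M" "size S' = size T" "GQ S' T \<le> M"
  shows "GQ (image_mset (contract_to_cluster T M s l) S) (image_mset (contract_to_cluster T M s l) S')
    \<le> \<bar>l\<bar> * GQ S S'"
proof -
  obtain xs ys where h: "mset xs = S" "mset ys = S'" "GQ S S' = enum_dist xs ys"
    using GQ_optimal_enums[of S' S] assms by auto
  have l: "length ys = length xs" using h assms by (metis size_mset)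
  have "GQ S S' \<le> GQ S T + GQ T S'" by (rule GQ_triangle) (use assms in auto)
  then have SS': "GQ S S' \<le> 2 * M" using assms GQ_sym[of S' T] by simp
  let ?\<psi> = "contract_to_cluster T M s l"
  have "GQ (image_mset ?\<psi> S) (image_mset ?\<psi> S') \<le> enum_dist (map ?\<psi> xs) (map ?\<psi> ys)"
    by (rule GQ_image_mset_le[OF h(1,2) l])
  also have "\<dots> \<le> \<bar>l\<bar> * enum_dist xs ys"
  proof (rule enum_dist_map_le[OF l])
    fix i assume i: "i < length xs"
    have "xs ! i \<in># S" "ys ! i \<in># S'" using h i l by (metis nth_mem set_mset_mset)+
    then obtain q q' where "q \<in># T" "dist (xs ! i) q \<le> M" "q' \<in># T" "dist (ys ! i) q' \<le> M"
      using GQ_close_point[OF assms(1,2)] GQ_close_point[OF assms(3,4)] by meson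
    moreover have "dist (xs ! i) (ys ! i) \<le> 2 * M"
      using norm_nth_le_enum_dist[OF i, of ys] h SS' by (simp add: dist_norm)
    ultimately have "cluster_point T M s (xs ! i) = cluster_point T M s (ys ! i)"
      by (intro cluster_point_eq)
    then have "?\<psi> (xs ! i) - ?\<psi> (ys ! i) = l *\<^sub>R (xs ! i - ys ! i)"
      by (simp add: contract_to_cluster_def algebra_simps)
    then show "norm (?\<psi> (xs ! i) - ?\<psi> (ys ! i)) \<le> \<bar>l\<bar> * norm (xs ! i - ys ! i)" by simp
  qed simp
  finally show ?thesis using h by simp
qed

end

locale star_gauge =
  fixes c :: pt and g :: "pt \<Rightarrow> real" and m R :: real
  assumes m_pos: "0 < m"
    and gauge_nonneg: "0 \<le> g x"
    and gauge_eq_0_iff: "g x = 0 \<longleftrightarrow> x = c"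
    and gauge_homogeneous: "0 \<le> t \<Longrightarrow> g (c + t *\<^sub>R (x - c)) = t * g x"
    and gauge_lipschitz: "\<bar>g x - g y\<bar> \<le> dist x y / m"
    and gauge_radius: "g y = 1 \<Longrightarrow> dist y c \<le> R"
begin

definition radial_proj :: "pt \<Rightarrow> pt" where
  "radial_proj x = c + (1 / g x) *\<^sub>R (x - c)"

lemma gauge_radial_proj: "x \<noteq> c \<Longrightarrow> g (radial_proj x) = 1"
  using gauge_homogeneous[of "1 / g x" x] gauge_nonneg[of x] gauge_eq_0_iff[of x]
  by (simp add: radial_proj_def)

lemma radius_nonneg: "0 \<le> R"
proof -
  have "c + (1, 0) \<noteq> c" by (simp add: zero_prod_def)
  then show ?thesis using gauge_radius[OF gauge_radial_proj] zero_le_dist order_trans by blast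
qed

lemma radial_proj_scale: "x \<noteq> c \<Longrightarrow> x = c + g x *\<^sub>R (radial_proj x - c)"
  using gauge_eq_0_iff[of x] by (simp add: radial_proj_def)

definition cone_fill :: "pt multiset \<Rightarrow> real \<Rightarrow> real \<Rightarrow> (pt \<Rightarrow> pt multiset) \<Rightarrow> pt \<Rightarrow> pt multiset" where
  "cone_fill T M s \<phi> x = (if x = c then image_mset (cluster_point T M s) T
     else image_mset (contract_to_cluster T M s (g x)) (\<phi> (radial_proj x)))"

context
  fixes T :: "pt multiset" and M s \<Lambda> :: real and \<phi> :: "pt \<Rightarrow> pt multiset"
  assumes gap: "gap_scale T M s"
    and near: "\<And>y. g y = 1 \<Longrightarrow> size (\<phi> y) = size T \<and> GQ (\<phi> y) T \<le> M"
    and lip: "\<And>y y'. g y = 1 \<Longrightarrow> g y' = 1 \<Longrightarrow> GQ (\<phi> y) (\<phi> y') \<le> \<Lambda> * dist y y'"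
    and \<Lambda>: "0 \<le> \<Lambda>"
begin

lemma size_cone_fill: "size (cone_fill T M s \<phi> x) = size T"
  using near gauge_radial_proj by (simp add: cone_fill_def)

lemma cone_fill_boundary: "g y = 1 \<Longrightarrow> cone_fill T M s \<phi> y = \<phi> y"
proof -
  assume "g y = 1"
  moreover have "contract_to_cluster T M s 1 = id" by (simp add: fun_eq_iff contract_to_cluster_def)
  ultimately show ?thesis using gauge_eq_0_iff[of y] by (simp add: cone_fill_def radial_proj_def)
qed

lemma GQ_cone_fill_center:
  "GQ (cone_fill T M s \<phi> c) (cone_fill T M s \<phi> x) \<le> g x * (size T * (s + M))"
proof (cases "x = c")
  case True
  then show ?thesis using GQ_self gauge_nonneg[of x] gap by (simp add: gap_scale_def)
next
  case False
  note y = near[OF gauge_radial_proj[OF False]]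
  have "contract_to_cluster T M s 0 = cluster_point T M s"
    by (simp add: fun_eq_iff contract_to_cluster_def)
  then have "cone_fill T M s \<phi> c = image_mset (contract_to_cluster T M s 0) (\<phi> (radial_proj x))"
    using image_mset_cluster_point[OF gap y[THEN conjunct1] y[THEN conjunct2]]
    by (simp add: cone_fill_def)
  then show ?thesis
    using GQ_contract_to_cluster_param[OF gap y[THEN conjunct1] y[THEN conjunct2], of 0 "g x"]
      gauge_nonneg[of x] False by (simp add: cone_fill_def)
qed

lemma GQ_cone_fill_off_center:
  assumes "x \<noteq> c" "x' \<noteq> c"
  shows "GQ (cone_fill T M s \<phi> x) (cone_fill T M s \<phi> x')
    \<le> \<bar>g x - g x'\<bar> * (size T * (s + M) + R * \<Lambda>) + \<Lambda> * dist x x'"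
proof -
  define y y' where "y = radial_proj x" and "y' = radial_proj x'"
  have gy: "g y = 1" "g y' = 1" using gauge_radial_proj assms y_def y'_def by auto
  note ny = near[OF gy(1)] and ny' = near[OF gy(2)]
  let ?\<psi> = "contract_to_cluster T M s"
  have "cone_fill T M s \<phi> x = image_mset (?\<psi> (g x)) (\<phi> y)"
    "cone_fill T M s \<phi> x' = image_mset (?\<psi> (g x')) (\<phi> y')"
    using assms by (simp_all add: cone_fill_def y_def y'_def)
  then have "GQ (cone_fill T M s \<phi> x) (cone_fill T M s \<phi> x')
      \<le> GQ (image_mset (?\<psi> (g x)) (\<phi> y)) (image_mset (?\<psi> (g x')) (\<phi> y))
        + GQ (image_mset (?\<psi> (g x')) (\<phi> y)) (image_mset (?\<psi> (g x')) (\<phi> y'))"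
    using ny ny' by (simp add: GQ_triangle)
  also have "GQ (image_mset (?\<psi> (g x)) (\<phi> y)) (image_mset (?\<psi> (g x')) (\<phi> y))
      \<le> \<bar>g x - g x'\<bar> * (size T * (s + M))"
    using GQ_contract_to_cluster_param[OF gap] ny by blast
  also have "GQ (image_mset (?\<psi> (g x')) (\<phi> y)) (image_mset (?\<psi> (g x')) (\<phi> y'))
      \<le> g x' * (\<Lambda> * dist y y')"
    using GQ_contract_to_cluster[OF gap] ny ny' lip[OF gy] gauge_nonneg[of x']
    by (smt (verit, best) mult_left_mono)
  also have "g x' * (\<Lambda> * dist y y') = \<Lambda> * dist (c + g x' *\<^sub>R (y - c)) x'"
  proof -
    have "x' = c + g x' *\<^sub>R (y' - c)" using radial_proj_scale[OF assms(2)] by (simp add: y'_def)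
    then have "dist (c + g x' *\<^sub>R (y - c)) x' = dist (c + g x' *\<^sub>R (y - c)) (c + g x' *\<^sub>R (y' - c))"
      by (rule arg_cong[where f="dist (c + g x' *\<^sub>R (y - c))"])
    also have "\<dots> = g x' * dist y y'"
      using gauge_nonneg[of x'] by (simp add: dist_norm flip: scaleR_diff_right)
    finally show ?thesis by simp
  qed
  also have "\<Lambda> * dist (c + g x' *\<^sub>R (y - c)) x' \<le> \<Lambda> * (\<bar>g x - g x'\<bar> * R + dist x x')"
  proof (rule mult_left_mono[OF _ \<Lambda>])
    have "x = c + g x *\<^sub>R (y - c)" using radial_proj_scale[OF assms(1)] by (simp add: y_def)
    then have "dist (c + g x' *\<^sub>R (y - c)) x = dist (c + g x' *\<^sub>R (y - c)) (c + g x *\<^sub>R (y - c))"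
      by (rule arg_cong[where f="dist (c + g x' *\<^sub>R (y - c))"])
    also have "\<dots> = \<bar>g x - g x'\<bar> * dist y c"
      by (simp add: dist_norm abs_minus_commute flip: scaleR_diff_left)
    also have "\<dots> \<le> \<bar>g x - g x'\<bar> * R" using gauge_radius[OF gy(1)] by (simp add: mult_left_mono)
    finally show "dist (c + g x' *\<^sub>R (y - c)) x' \<le> \<bar>g x - g x'\<bar> * R + dist x x'"
      using dist_triangle[of "c + g x' *\<^sub>R (y - c)" x' x] by linarith
  qed
  finally show ?thesis by (simp add: algebra_simps)
qed

lemma GQ_cone_fill:
  "GQ (cone_fill T M s \<phi> x) (cone_fill T M s \<phi> x')
    \<le> \<bar>g x - g x'\<bar> * (size T * (s + M) + R * \<Lambda>) + \<Lambda> * dist x x'"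
proof -
  have A: "0 \<le> size T * (s + M)" "0 \<le> R * \<Lambda>" using gap radius_nonneg \<Lambda> by (auto simp: gap_scale_def)
  consider "x \<noteq> c" "x' \<noteq> c" | "x = c" | "x' = c" by blast
  then show ?thesis
  proof cases
    case 1
    then show ?thesis by (rule GQ_cone_fill_off_center)
  next
    case 2
    then have "GQ (cone_fill T M s \<phi> x) (cone_fill T M s \<phi> x') \<le> \<bar>g x - g x'\<bar> * (size T * (s + M))"
      using GQ_cone_fill_center[of x'] gauge_eq_0_iff[of c] gauge_nonneg[of x'] by simp
    then show ?thesis using A \<Lambda> by (smt (verit) mult_left_mono abs_ge_zero zero_le_dist mult_nonneg_nonneg)
  next
    case 3
    then have "GQ (cone_fill T M s \<phi> x) (cone_fill T M s \<phi> x') \<le> \<bar>g x - g x'\<bar> * (size T * (s + M))"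
      using GQ_cone_fill_center[of x] gauge_eq_0_iff[of c] gauge_nonneg[of x]
        GQ_sym[OF size_cone_fill[of x, folded size_cone_fill[of x']]] by simp
    then show ?thesis using A \<Lambda> by (smt (verit) mult_left_mono abs_ge_zero zero_le_dist mult_nonneg_nonneg)
  qed
qed

end

theorem cone_extension:
  assumes y0: "g y0 = 1" and \<Lambda>: "0 \<le> \<Lambda>"
    and size_\<phi>: "\<And>y. g y = 1 \<Longrightarrow> size (\<phi> y) = Q"
    and lip_\<phi>: "\<And>y y'. g y = 1 \<Longrightarrow> g y' = 1 \<Longrightarrow> GQ (\<phi> y) (\<phi> y') \<le> \<Lambda> * dist y y'"
  shows "\<exists>\<Phi>. (\<forall>x. size (\<Phi> x) = Q) \<and> (\<forall>y. g y = 1 \<longrightarrow> \<Phi> y = \<phi> y) \<and>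
    (\<forall>x x'. GQ (\<Phi> x) (\<Phi> x') \<le> (1 + 12 * (real Q + 1) * 2 ^ (Q * Q) * R / m) * \<Lambda> * dist x x')"
proof (cases "\<Lambda> = 0")
  case True
  have "\<phi> y = \<phi> y0" if "g y = 1" for y
    using lip_\<phi>[OF that y0] GQ_nonneg[of "\<phi> y0" "\<phi> y"] GQ_eq_0D[of "\<phi> y0" "\<phi> y"]
      size_\<phi>[OF that] size_\<phi>[OF y0] True by simp
  then show ?thesis by (intro exI[of _ "\<lambda>_. \<phi> y0"]) (auto simp: GQ_self size_\<phi>[OF y0] True)
next
  case False
  then have \<Lambda>_pos: "0 < \<Lambda>" using \<Lambda> by simp
  have "y0 \<noteq> c" using y0 gauge_eq_0_iff[of c] by auto
  then have R_pos: "0 < R" using gauge_radius[OF y0] by (smt (verit) zero_less_dist_iff)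
  define T M where "T = \<phi> y0" and "M = 2 * R * \<Lambda>"
  have M_pos: "0 < M" using R_pos \<Lambda>_pos by (simp add: M_def)
  have size_T: "size T = Q" unfolding T_def by (rule size_\<phi>[OF y0])
  have near: "size (\<phi> y) = size T \<and> GQ (\<phi> y) T \<le> M" if "g y = 1" for y
  proof -
    have "dist y y0 \<le> 2 * R" using dist_triangle[of y y0 c] gauge_radius[OF that] gauge_radius[OF y0]
      by (simp add: dist_commute)
    then show ?thesis using lip_\<phi>[OF that y0] size_\<phi> that y0 \<Lambda>
      by (smt (verit) M_def T_def mult_left_mono mult.assoc mult.commute)
  qed
  obtain xs where xs: "mset xs = T" using ex_mset by blast
  then have "card (set_mset T) \<le> Q"
    using card_length[of xs] size_T by (metis set_mset_mset size_mset)
  then obtain k where k: "k \<le> Q * Q"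
    and window: "\<forall>p\<in>#T. \<forall>q\<in>#T. \<not> (5 * M * 2 ^ k \<le> dist p q \<and> dist p q < 2 * (5 * M * 2 ^ k))"
    using exists_gap_scale[of "set_mset T" Q "5 * M"] M_pos by auto
  define s where "s = 5 * M * 2 ^ k"
  have gap: "gap_scale T M s" using window M_pos by (simp add: gap_scale_def s_def)
  have "s \<le> 5 * (M * 2 ^ (Q * Q))"
    using k M_pos by (simp add: s_def power_increasing)
  moreover have "M \<le> M * 2 ^ (Q * Q)" using M_pos by simp
  ultimately have "s + M \<le> 6 * (M * 2 ^ (Q * Q))" by linarith
  also have "\<dots> = 12 * 2 ^ (Q * Q) * R * \<Lambda>" by (simp add: M_def)
  finally have sM: "s + M \<le> 12 * 2 ^ (Q * Q) * R * \<Lambda>" .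
  have "(1::real) \<le> 2 ^ (Q * Q)" by simp
  then have "(1::real) \<le> 12 * 2 ^ (Q * Q)" by linarith
  then have "1 * (R * \<Lambda>) \<le> (12 * 2 ^ (Q * Q)) * (R * \<Lambda>)"
    using R_pos \<Lambda>_pos by (intro mult_right_mono) auto
  then have "R * \<Lambda> \<le> 12 * 2 ^ (Q * Q) * R * \<Lambda>" by (simp add: mult.assoc)
  moreover have "real Q * (s + M) \<le> real Q * (12 * 2 ^ (Q * Q) * R * \<Lambda>)"
    using sM by (rule mult_left_mono) simp
  ultimately have "real Q * (s + M) + R * \<Lambda> \<le> real Q * (12 * 2 ^ (Q * Q) * R * \<Lambda>) + 12 * 2 ^ (Q * Q) * R * \<Lambda>"
    by linarith
  then have B: "size T * (s + M) + R * \<Lambda> \<le> 12 * (real Q + 1) * 2 ^ (Q * Q) * R * \<Lambda>"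
    using size_T by (simp add: algebra_simps)
  have "GQ (cone_fill T M s \<phi> x) (cone_fill T M s \<phi> x')
      \<le> (1 + 12 * (real Q + 1) * 2 ^ (Q * Q) * R / m) * \<Lambda> * dist x x'" for x x'
  proof -
    have "\<bar>g x - g x'\<bar> * (size T * (s + M) + R * \<Lambda>)
        \<le> dist x x' / m * (12 * (real Q + 1) * 2 ^ (Q * Q) * R * \<Lambda>)"
    proof (rule mult_mono[OF gauge_lipschitz B])
      show "0 \<le> dist x x' / m" using m_pos by simp
      show "0 \<le> size T * (s + M) + R * \<Lambda>" using gap R_pos \<Lambda>_pos by (simp add: gap_scale_def)
    qed
    then have "GQ (cone_fill T M s \<phi> x) (cone_fill T M s \<phi> x')
        \<le> dist x x' / m * (12 * (real Q + 1) * 2 ^ (Q * Q) * R * \<Lambda>) + \<Lambda> * dist x x'"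
      using GQ_cone_fill[OF gap near lip_\<phi> \<Lambda>, of x x'] by linarith
    also have "\<dots> = (1 + 12 * (real Q + 1) * 2 ^ (Q * Q) * R / m) * \<Lambda> * dist x x'"
      by (simp add: field_simps)
    finally show ?thesis .
  qed
  moreover have "\<forall>y. g y = 1 \<longrightarrow> cone_fill T M s \<phi> y = \<phi> y"
    using cone_fill_boundary[OF gap near lip_\<phi> \<Lambda>] by blast
  moreover have "\<forall>x. size (cone_fill T M s \<phi> x) = Q"
    using size_cone_fill[OF gap near lip_\<phi> \<Lambda>] unfolding size_T by blast
  ultimately show ?thesis by (intro exI[of _ "cone_fill T M s \<phi>"]) blast
qed

end

definition rect :: "real \<Rightarrow> real \<Rightarrow> real \<Rightarrow> real \<Rightarrow> pt set" where
  "rect u0 u1 t0 t1 = {u0..u1} \<times> {t0..t1}"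

lemma mem_frontier_rect:
  "x \<in> frontier (rect u0 u1 t0 t1) \<longleftrightarrow>
    x \<in> rect u0 u1 t0 t1 \<and> (fst x = u0 \<or> fst x = u1 \<or> snd x = t0 \<or> snd x = t1)"
proof -
  have "frontier (rect u0 u1 t0 t1) = rect u0 u1 t0 t1 - {u0<..<u1} \<times> {t0<..<t1}"
    unfolding rect_def frontier_def by (simp add: closure_Times interior_Times)
  then show ?thesis by (cases x) (auto simp: rect_def)
qed

lemma dist_le_abs_fst_snd: "dist (x::pt) y \<le> \<bar>fst x - fst y\<bar> + \<bar>snd x - snd y\<bar>"
  using sqrt_sum_squares_le_sum_abs[of "fst x - fst y" "snd x - snd y"]
  by (simp add: dist_prod_def dist_real_def)

definition rect_gauge :: "pt \<Rightarrow> real \<Rightarrow> real \<Rightarrow> pt \<Rightarrow> real" where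
  "rect_gauge c h1 h2 x = max (\<bar>fst x - fst c\<bar> / h1) (\<bar>snd x - snd c\<bar> / h2)"

context
  fixes c :: pt and h1 h2 :: real
  assumes h1: "0 < h1" and h2: "0 < h2"
begin

lemma rect_gauge_le_1_iff:
  "rect_gauge c h1 h2 x \<le> 1 \<longleftrightarrow> x \<in> rect (fst c - h1) (fst c + h1) (snd c - h2) (snd c + h2)"
  using h1 h2 by (cases x) (auto simp: rect_gauge_def rect_def abs_le_iff divide_le_eq_1)

lemma rect_gauge_eq_1_iff:
  "rect_gauge c h1 h2 x = 1 \<longleftrightarrow> x \<in> frontier (rect (fst c - h1) (fst c + h1) (snd c - h2) (snd c + h2))"
  using h1 h2 unfolding mem_frontier_rect
  by (cases x) (auto simp: rect_gauge_def rect_def max_def abs_le_iff divide_le_eq_1 divide_eq_1_iff abs_if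
      split: if_splits)

lemma star_gauge_rect_gauge: "star_gauge c (rect_gauge c h1 h2) (min h1 h2) (h1 + h2)"
proof
  show "0 < min h1 h2" using h1 h2 by simp
  fix x y :: pt and t :: real
  show "0 \<le> rect_gauge c h1 h2 x" using h1 h2 by (simp add: rect_gauge_def le_max_iff_disj)
  show "rect_gauge c h1 h2 x = 0 \<longleftrightarrow> x = c"
    using h1 h2 by (cases x, cases c) (auto simp: rect_gauge_def max_def divide_le_0_iff split: if_splits)
  show "0 \<le> t \<Longrightarrow> rect_gauge c h1 h2 (c + t *\<^sub>R (x - c)) = t * rect_gauge c h1 h2 x"
    by (simp add: rect_gauge_def abs_mult max_mult_distrib_left)
  have "\<bar>\<bar>fst x - fst c\<bar> / h1 - \<bar>fst y - fst c\<bar> / h1\<bar> \<le> dist x y / min h1 h2"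
  proof -
    have "\<bar>\<bar>fst x - fst c\<bar> / h1 - \<bar>fst y - fst c\<bar> / h1\<bar> \<le> \<bar>fst x - fst y\<bar> / h1"
      using h1 by (simp add: diff_divide_distrib[symmetric] divide_right_mono abs_triangle_ineq3)
    also have "\<dots> \<le> dist x y / h1"
      using h1 dist_fst_le[of x y] by (simp add: divide_right_mono dist_real_def)
    also have "\<dots> \<le> dist x y / min h1 h2" using h1 h2 by (simp add: frac_le min_def)
    finally show ?thesis .
  qed
  moreover have "\<bar>\<bar>snd x - snd c\<bar> / h2 - \<bar>snd y - snd c\<bar> / h2\<bar> \<le> dist x y / min h1 h2"
  proof -
    have "\<bar>\<bar>snd x - snd c\<bar> / h2 - \<bar>snd y - snd c\<bar> / h2\<bar> \<le> \<bar>snd x - snd y\<bar> / h2"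
      using h2 by (simp add: diff_divide_distrib[symmetric] divide_right_mono abs_triangle_ineq3)
    also have "\<dots> \<le> dist x y / h2"
      using h2 dist_snd_le[of x y] by (simp add: divide_right_mono dist_real_def)
    also have "\<dots> \<le> dist x y / min h1 h2" using h1 h2 by (simp add: frac_le min_def)
    finally show ?thesis .
  qed
  ultimately show "\<bar>rect_gauge c h1 h2 x - rect_gauge c h1 h2 y\<bar> \<le> dist x y / min h1 h2"
    unfolding rect_gauge_def by (simp add: max_def abs_le_iff)
  assume "rect_gauge c h1 h2 y = 1"
  then have "\<bar>fst y - fst c\<bar> \<le> h1" "\<bar>snd y - snd c\<bar> \<le> h2"
    using h1 h2 by (auto simp: rect_gauge_def max_def divide_le_eq_1 split: if_splits)
  then show "dist y c \<le> h1 + h2" using dist_le_abs_fst_snd[of y c] by linarith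
qed

end

definition cone_const :: "nat \<Rightarrow> real" where
  "cone_const Q = 37 * (real Q + 1) * 2 ^ (Q * Q)"

lemma cone_const_pos: "0 < cone_const Q"
  by (simp add: cone_const_def)

theorem rect_cone_extension:
  assumes u: "u0 < u1" and t: "t0 < t1"
    and aspect: "u1 - u0 \<le> 2 * (t1 - t0)" "t1 - t0 \<le> 2 * (u1 - u0)" and \<Lambda>: "0 \<le> \<Lambda>"
    and size_\<phi>: "\<forall>y\<in>frontier (rect u0 u1 t0 t1). size (\<phi> y) = Q"
    and lip_\<phi>: "\<forall>y\<in>frontier (rect u0 u1 t0 t1). \<forall>y'\<in>frontier (rect u0 u1 t0 t1).
      GQ (\<phi> y) (\<phi> y') \<le> \<Lambda> * dist y y'"
  shows "\<exists>\<Phi>. (\<forall>x. size (\<Phi> x) = Q) \<and> (\<forall>y\<in>frontier (rect u0 u1 t0 t1). \<Phi> y = \<phi> y) \<and>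
    (\<forall>x x'. GQ (\<Phi> x) (\<Phi> x') \<le> cone_const Q * \<Lambda> * dist x x')"
proof -
  define c h1 h2 where "c = ((u0 + u1) / 2, (t0 + t1) / 2)" and "h1 = (u1 - u0) / 2" and "h2 = (t1 - t0) / 2"
  have h: "0 < h1" "0 < h2" using u t by (auto simp: h1_def h2_def)
  have R: "rect (fst c - h1) (fst c + h1) (snd c - h2) (snd c + h2) = rect u0 u1 t0 t1"
    by (simp add: c_def h1_def h2_def field_simps)
  interpret star_gauge c "rect_gauge c h1 h2" "min h1 h2" "h1 + h2"
    by (rule star_gauge_rect_gauge[OF h])
  have boundary: "rect_gauge c h1 h2 y = 1 \<longleftrightarrow> y \<in> frontier (rect u0 u1 t0 t1)" for y
    using rect_gauge_eq_1_iff[OF h] R by simp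
  have "(u0, t0) \<in> frontier (rect u0 u1 t0 t1)" using u t unfolding mem_frontier_rect by (simp add: rect_def)
  then have y0: "rect_gauge c h1 h2 (u0, t0) = 1" using boundary by blast
  have "\<And>y. rect_gauge c h1 h2 y = 1 \<Longrightarrow> size (\<phi> y) = Q"
    "\<And>y y'. rect_gauge c h1 h2 y = 1 \<Longrightarrow> rect_gauge c h1 h2 y' = 1 \<Longrightarrow> GQ (\<phi> y) (\<phi> y') \<le> \<Lambda> * dist y y'"
    using size_\<phi> lip_\<phi> boundary by blast+
  from cone_extension[OF y0 \<Lambda> this] obtain \<Phi> where \<Phi>: "\<forall>x. size (\<Phi> x) = Q"
    "\<forall>y. rect_gauge c h1 h2 y = 1 \<longrightarrow> \<Phi> y = \<phi> y"
    "\<forall>x x'. GQ (\<Phi> x) (\<Phi> x') \<le> (1 + 12 * (real Q + 1) * 2 ^ (Q * Q) * (h1 + h2) / min h1 h2) * \<Lambda> * dist x x'"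
    by blast
  have "h1 \<le> 2 * h2" "h2 \<le> 2 * h1" using aspect by (simp_all add: h1_def h2_def)
  then have "h1 + h2 \<le> 3 * min h1 h2" by (simp add: min_def)
  then have "(h1 + h2) / min h1 h2 \<le> 3" using h by (simp add: pos_divide_le_eq)
  define K where "K = (real Q + 1) * 2 ^ (Q * Q)"
  have "(1::real) * 1 \<le> (real Q + 1) * 2 ^ (Q * Q)" by (rule mult_mono) simp_all
  then have K: "1 \<le> K" by (simp add: K_def)
  have "1 + 12 * (real Q + 1) * 2 ^ (Q * Q) * (h1 + h2) / min h1 h2 = 1 + 12 * K * ((h1 + h2) / min h1 h2)"
    by (simp add: K_def)
  also have "\<dots> \<le> 1 + 12 * K * 3"
    using \<open>(h1 + h2) / min h1 h2 \<le> 3\<close> K by (intro add_left_mono mult_left_mono) simp_all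
  also have "\<dots> \<le> 37 * K" using K by linarith
  also have "\<dots> = cone_const Q" by (simp add: cone_const_def K_def)
  finally have "1 + 12 * (real Q + 1) * 2 ^ (Q * Q) * (h1 + h2) / min h1 h2 \<le> cone_const Q" .
  then have "\<forall>x x'. GQ (\<Phi> x) (\<Phi> x') \<le> cone_const Q * \<Lambda> * dist x x'"
    using \<Phi>(3) \<Lambda> by (smt (verit) mult_right_mono zero_le_dist mult_nonneg_nonneg)
  then show ?thesis using \<Phi>(1,2) boundary by blast
qed

lemma GQ_lipschitz_interval_glue:
  fixes u :: "real \<Rightarrow> pt multiset" and K :: real
  assumes "finite F" "\<forall>A\<in>F. closed A" "{a..b} \<subseteq> \<Union>F" "a \<le> b" "0 \<le> K"
    and "\<forall>t\<in>{a..b}. size (u t) = Q"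
    and "\<forall>A\<in>F. \<forall>t\<in>A \<inter> {a..b}. \<forall>t'\<in>A \<inter> {a..b}. GQ (u t) (u t') \<le> K * \<bar>t - t'\<bar>"
  shows "GQ (u a) (u b) \<le> K * (b - a)"
  using assms
proof (induction "card F" arbitrary: F a rule: less_induct)
  case less
  note F = less.prems
  obtain A where A: "A \<in> F" "a \<in> A" using F(3,4) by auto
  define S where "S = A \<inter> {a..b}"
  have "a \<in> S" using A F(4) by (simp add: S_def)
  have S_bdd: "bdd_above S" by (rule bdd_aboveI[of _ b]) (auto simp: S_def)
  define t where "t = Sup S"
  have "t \<in> S" unfolding t_def using \<open>a \<in> S\<close> S_bdd F(2) A(1)
    by (intro closed_contains_Sup) (auto simp: S_def)
  have at: "a \<le> t" "t \<le> b" using \<open>t \<in> S\<close> cSup_upper[OF \<open>a \<in> S\<close> S_bdd] by (auto simp: t_def S_def)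
  have "GQ (u a) (u t) \<le> K * \<bar>a - t\<bar>"
    using F(7) A(1) \<open>t \<in> S\<close> \<open>a \<in> S\<close> unfolding S_def by blast
  then have first: "GQ (u a) (u t) \<le> K * (t - a)" using at by simp
  show ?case
  proof (cases "t = b")
    case True
    then show ?thesis using first by simp
  next
    case False
    define F' where "F' = F - {A}"
    have "card F' < card F" unfolding F'_def using A(1) F(1) by (metis card_Diff1_less)
    have "{t<..b} \<subseteq> \<Union>F'"
    proof
      fix x assume x: "x \<in> {t<..b}"
      then have "x \<notin> A" using cSup_upper[OF _ S_bdd, of x] at by (force simp: t_def S_def)
      moreover have "x \<in> {a..b}" using x at by auto
      then have "x \<in> \<Union>F" using F(3) by blast
      ultimately show "x \<in> \<Union>F'" unfolding F'_def by auto
    qed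
    moreover have "closed (\<Union>F')" using F(1,2) unfolding F'_def by auto
    ultimately have "closure {t<..b} \<subseteq> \<Union>F'" by (rule closure_minimal)
    then have "{t..b} \<subseteq> \<Union>F'" using False at by simp
    have "GQ (u t) (u b) \<le> K * (b - t)"
    proof (rule less.hyps[OF \<open>card F' < card F\<close>])
      show "finite F'" "\<forall>A\<in>F'. closed A" using F(1,2) by (auto simp: F'_def)
      show "\<forall>x\<in>{t..b}. size (u x) = Q" using F(6) at by auto
      show "\<forall>A\<in>F'. \<forall>x\<in>A \<inter> {t..b}. \<forall>x'\<in>A \<inter> {t..b}. GQ (u x) (u x') \<le> K * \<bar>x - x'\<bar>"
        using F(7) at unfolding F'_def by fastforce
    qed (use \<open>{t..b} \<subseteq> \<Union>F'\<close> at F(5) in auto)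
    moreover have "GQ (u a) (u b) \<le> GQ (u a) (u t) + GQ (u t) (u b)"
      by (rule GQ_triangle) (use F(6) at in auto)
    ultimately show ?thesis using first by (simp add: algebra_simps)
  qed
qed

lemma GQ_lipschitz_convex_glue:
  fixes S :: "'a::real_normed_vector set" and h :: "'a \<Rightarrow> pt multiset" and K :: real
  assumes "convex S" "finite F" "\<forall>P\<in>F. closed P" "S \<subseteq> \<Union>F" "0 \<le> K"
    and "\<forall>P\<in>F. \<forall>x\<in>P \<inter> S. \<forall>y\<in>P \<inter> S. GQ (h x) (h y) \<le> K * dist x y"
    and "\<forall>x\<in>S. size (h x) = Q" "x \<in> S" "y \<in> S"
  shows "GQ (h x) (h y) \<le> K * dist x y"
proof -
  define \<gamma> where "\<gamma> t = x + t *\<^sub>R (y - x)" for t :: real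
  have seg: "\<gamma> t \<in> S" if "t \<in> {0..1}" for t
    using convexD_alt[OF assms(1,8,9), of t] that by (simp add: \<gamma>_def algebra_simps)
  have dist_\<gamma>: "dist (\<gamma> t) (\<gamma> t') = \<bar>t - t'\<bar> * dist x y" for t t'
  proof -
    have "\<gamma> t - \<gamma> t' = (t - t') *\<^sub>R (y - x)" by (simp add: \<gamma>_def algebra_simps)
    then show ?thesis by (simp add: dist_norm norm_minus_commute)
  qed
  have "GQ (h (\<gamma> 0)) (h (\<gamma> 1)) \<le> (K * dist x y) * (1 - 0)"
  proof (rule GQ_lipschitz_interval_glue[where F="(\<lambda>P. \<gamma> -` P) ` F" and Q=Q])
    show "\<forall>A\<in>(\<lambda>P. \<gamma> -` P) ` F. closed A"
      using assms(3) unfolding \<gamma>_def by (auto intro!: continuous_closed_vimage continuous_intros)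
    show "\<forall>A\<in>(\<lambda>P. \<gamma> -` P) ` F. \<forall>t\<in>A \<inter> {0..1}. \<forall>t'\<in>A \<inter> {0..1}.
        GQ (h (\<gamma> t)) (h (\<gamma> t')) \<le> K * dist x y * \<bar>t - t'\<bar>"
    proof (intro ballI)
      fix A t t' assume "A \<in> (\<lambda>P. \<gamma> -` P) ` F" "t \<in> A \<inter> {0..1}" "t' \<in> A \<inter> {0..1}"
      then obtain P where "P \<in> F" "\<gamma> t \<in> P \<inter> S" "\<gamma> t' \<in> P \<inter> S" using seg by auto
      then have "GQ (h (\<gamma> t)) (h (\<gamma> t')) \<le> K * dist (\<gamma> t) (\<gamma> t')" using assms(6) by blast
      then show "GQ (h (\<gamma> t)) (h (\<gamma> t')) \<le> K * dist x y * \<bar>t - t'\<bar>" by (simp add: dist_\<gamma> algebra_simps)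
    qed
    show "{0..1} \<subseteq> \<Union> ((\<lambda>P. \<gamma> -` P) ` F)" using assms(4) seg by blast
    show "\<forall>t\<in>{0..1}. size (h (\<gamma> t)) = Q" using assms(7) seg by blast
  qed (use assms(2,5) in auto)
  then show ?thesis by (simp add: \<gamma>_def)
qed

lemma GQ_lipschitz_two_scales:
  assumes "0 < \<delta>" "0 \<le> K" "0 \<le> D"
    and osc: "\<forall>y\<in>A. \<forall>y'\<in>A. GQ (\<phi> y) (\<phi> y') \<le> D"
    and near: "\<forall>y\<in>A. \<forall>y'\<in>A. dist y y' < \<delta> \<longrightarrow> GQ (\<phi> y) (\<phi> y') \<le> K * dist y y'"
  shows "\<forall>y\<in>A. \<forall>y'\<in>A. GQ (\<phi> y) (\<phi> y') \<le> (K + D / \<delta>) * dist y y'"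
proof (intro ballI)
  fix y y' assume y: "y \<in> A" "y' \<in> A"
  show "GQ (\<phi> y) (\<phi> y') \<le> (K + D / \<delta>) * dist y y'"
  proof (cases "dist y y' < \<delta>")
    case True
    then show ?thesis using near y assms(3) \<open>0 < \<delta>\<close>
      by (smt (verit) divide_nonneg_pos mult_right_mono zero_le_dist)
  next
    case False
    have "D = D / \<delta> * \<delta>" using \<open>0 < \<delta>\<close> by simp
    also have "\<dots> \<le> D / \<delta> * dist y y'" using False assms(1,3) by (intro mult_left_mono) auto
    finally show ?thesis using osc y assms(2) by (smt (verit) mult_right_mono zero_le_dist)
  qed
qed

lemma GQ_lipschitz_through_corner:
  assumes "c \<in> A" "c \<in> B" "0 \<le> K"
    and size: "\<forall>y\<in>A \<union> B. size (\<phi> y) = Q"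
    and lip_A: "\<forall>y\<in>A. \<forall>y'\<in>A. GQ (\<phi> y) (\<phi> y') \<le> K * dist y y'"
    and lip_B: "\<forall>y\<in>B. \<forall>y'\<in>B. GQ (\<phi> y) (\<phi> y') \<le> K * dist y y'"
    and corner: "\<forall>y\<in>A. \<forall>y'\<in>B. dist y c \<le> dist y y' \<and> dist c y' \<le> dist y y'"
  shows "\<forall>y\<in>A \<union> B. \<forall>y'\<in>A \<union> B. GQ (\<phi> y) (\<phi> y') \<le> 2 * K * dist y y'"
proof -
  have cross: "GQ (\<phi> y) (\<phi> y') \<le> 2 * K * dist y y'" if "y \<in> A" "y' \<in> B" for y y'
  proof -
    have "GQ (\<phi> y) (\<phi> y') \<le> GQ (\<phi> y) (\<phi> c) + GQ (\<phi> c) (\<phi> y')"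
      by (rule GQ_triangle) (use size that assms(1) in auto)
    also have "\<dots> \<le> K * dist y c + K * dist c y'"
      using lip_A lip_B that assms(1,2) by (simp add: add_mono)
    also have "\<dots> \<le> K * dist y y' + K * dist y y'"
      using corner that assms(3) by (intro add_mono mult_left_mono) auto
    finally show ?thesis by simp
  qed
  have "K * dist y y' \<le> 2 * K * dist y y'" for y y' using assms(3) by simp
  then show ?thesis using cross[of _ _] lip_A lip_B size
    by (smt (verit, ccfv_threshold) GQ_sym UnE dist_commute)
qed

lemma dist_Pair_le_corner:
  fixes x1 x2 y1 y2 :: real
  shows "dist (x1, y1) (x2, y1) \<le> dist (x1, y1) (x2, y2)" "dist (x2, y1) (x2, y2) \<le> dist (x1, y1) (x2, y2)"
  using dist_fst_le[of "(x1, y1)" "(x2, y2)"] dist_snd_le[of "(x1, y1)" "(x2, y2)"]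
  by (simp_all add: dist_Pair_Pair)

lemma GQ_lipschitz_frontier_rect:
  fixes \<phi> :: "pt \<Rightarrow> pt multiset"
  assumes u: "u0 < u1" and t: "t0 < t1" and K: "0 \<le> K" and D: "0 \<le> D"
    and size: "\<forall>y\<in>frontier (rect u0 u1 t0 t1). size (\<phi> y) = Q"
    and osc: "\<forall>y\<in>frontier (rect u0 u1 t0 t1). \<forall>y'\<in>frontier (rect u0 u1 t0 t1). GQ (\<phi> y) (\<phi> y') \<le> D"
    and sides: "\<And>S. S \<in> {{u0..u1} \<times> {t0}, {u0..u1} \<times> {t1}, {u0} \<times> {t0..t1}, {u1} \<times> {t0..t1}} \<Longrightarrow>
      \<forall>y\<in>S. \<forall>y'\<in>S. GQ (\<phi> y) (\<phi> y') \<le> K * dist y y'"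
  shows "\<forall>y\<in>frontier (rect u0 u1 t0 t1). \<forall>y'\<in>frontier (rect u0 u1 t0 t1).
    GQ (\<phi> y) (\<phi> y') \<le> (2 * K + D / min (u1 - u0) (t1 - t0)) * dist y y'"
proof (rule GQ_lipschitz_two_scales)
  define L where "L p q = {u0..u1} \<times> {q} \<union> {p} \<times> {t0..t1}" for p q
  have L_sub: "L p q \<subseteq> frontier (rect u0 u1 t0 t1)" if "p \<in> {u0, u1}" "q \<in> {t0, t1}" for p q
    using that u t unfolding L_def subset_iff mem_frontier_rect by (auto simp: rect_def)
  have L_lip: "\<forall>y\<in>L p q. \<forall>y'\<in>L p q. GQ (\<phi> y) (\<phi> y') \<le> 2 * K * dist y y'"
    if pq: "p \<in> {u0, u1}" "q \<in> {t0, t1}" for p q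
    unfolding L_def
  proof (rule GQ_lipschitz_through_corner[where c="(p, q)"])
    show "(p, q) \<in> {u0..u1} \<times> {q}" "(p, q) \<in> {p} \<times> {t0..t1}" using pq u t by auto
    show "\<forall>y\<in>{u0..u1} \<times> {q}. \<forall>y'\<in>{p} \<times> {t0..t1}. dist y (p, q) \<le> dist y y' \<and> dist (p, q) y' \<le> dist y y'"
      by (auto simp: dist_Pair_le_corner)
    show "\<forall>y\<in>{u0..u1} \<times> {q} \<union> {p} \<times> {t0..t1}. size (\<phi> y) = Q"
      using size L_sub[OF pq] unfolding L_def by blast
    show "\<forall>y\<in>{u0..u1} \<times> {q}. \<forall>y'\<in>{u0..u1} \<times> {q}. GQ (\<phi> y) (\<phi> y') \<le> K * dist y y'"
      by (rule sides) (use pq in blast)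
    show "\<forall>y\<in>{p} \<times> {t0..t1}. \<forall>y'\<in>{p} \<times> {t0..t1}. GQ (\<phi> y) (\<phi> y') \<le> K * dist y y'"
      by (rule sides) (use pq in blast)
  qed (rule K)
  show "\<forall>y\<in>frontier (rect u0 u1 t0 t1). \<forall>y'\<in>frontier (rect u0 u1 t0 t1).
      dist y y' < min (u1 - u0) (t1 - t0) \<longrightarrow> GQ (\<phi> y) (\<phi> y') \<le> 2 * K * dist y y'"
  proof (intro ballI impI)
    fix y y' assume y: "y \<in> frontier (rect u0 u1 t0 t1)" "y' \<in> frontier (rect u0 u1 t0 t1)"
      and near: "dist y y' < min (u1 - u0) (t1 - t0)"
    have "\<bar>fst y - fst y'\<bar> < u1 - u0" "\<bar>snd y - snd y'\<bar> < t1 - t0"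
      using near dist_fst_le[of y y'] dist_snd_le[of y y'] by (auto simp: dist_real_def)
    define p where "p = (if fst y \<in> {u0, u1} then fst y else if fst y' \<in> {u0, u1} then fst y' else u0)"
    define q where "q = (if snd y \<in> {t0, t1} then snd y else if snd y' \<in> {t0, t1} then snd y' else t0)"
    have pq: "p \<in> {u0, u1}" "q \<in> {t0, t1}" "y \<in> L p q" "y' \<in> L p q"
      using y \<open>\<bar>fst y - fst y'\<bar> < u1 - u0\<close> \<open>\<bar>snd y - snd y'\<bar> < t1 - t0\<close>
      unfolding mem_frontier_rect L_def p_def q_def by (auto simp: rect_def mem_Times_iff)
    then show "GQ (\<phi> y) (\<phi> y') \<le> 2 * K * dist y y'" using L_lip by blast
  qed
qed (use u t K D osc in auto)

lemma infnorm_pt: "infnorm (x::pt) = max \<bar>fst x\<bar> \<bar>snd x\<bar>"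
  by (cases x) (simp add: infnorm_Max Basis_prod_def image_Un image_image)

lemma dist_Pair_same_snd: "dist (u, t) (u', t) = \<bar>u - u'\<bar>" for u u' t :: real
  by (simp add: dist_Pair_Pair dist_real_def)

lemma dist_Pair_same_fst: "dist (u, t) (u, t') = \<bar>t - t'\<bar>" for u t t' :: real
  by (simp add: dist_Pair_Pair dist_real_def)

locale annulus_data =
  fixes a b :: real and Q :: nat and f g :: "pt \<Rightarrow> pt multiset" and Lf Lg \<delta> :: real
  assumes ab: "0 < a" "a < b"
    and size_f: "\<And>x. infnorm x = a \<Longrightarrow> size (f x) = Q"
    and size_g: "\<And>x. infnorm x = b \<Longrightarrow> size (g x) = Q"
    and lip_f: "\<And>x y. infnorm x = a \<Longrightarrow> infnorm y = a \<Longrightarrow> GQ (f x) (f y) \<le> Lf * dist x y"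
    and lip_g: "\<And>x y. infnorm x = b \<Longrightarrow> infnorm y = b \<Longrightarrow> GQ (g x) (g y) \<le> Lg * dist x y"
    and f_close_g: "\<And>x. infnorm x = a \<Longrightarrow> GQ (f x) (g ((b / a) *\<^sub>R x)) \<le> \<delta>"
    and nonneg: "0 \<le> Lf" "0 \<le> Lg" "0 \<le> \<delta>"
begin

definition K0 :: real where
  "K0 = Lf + 3 * Lg + \<delta> / (b - a)"

lemma K0_nonneg: "0 \<le> K0"
  using nonneg ab by (simp add: K0_def)

lemma infnorm_inner: "\<bar>u\<bar> \<le> a \<Longrightarrow> infnorm (u, a) = a"
  using ab by (simp add: infnorm_pt)

lemma infnorm_outer: "\<bar>u\<bar> \<le> b \<Longrightarrow> infnorm (u, b) = b" "\<bar>u\<bar> \<le> b \<Longrightarrow> infnorm (-b, u) = b"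
  using ab by (simp_all add: infnorm_pt)

lemma GQ_g_outer: "\<bar>u\<bar> \<le> b \<Longrightarrow> \<bar>u'\<bar> \<le> b \<Longrightarrow> GQ (g (u, b)) (g (u', b)) \<le> K0 * \<bar>u - u'\<bar>"
  using lip_g[OF infnorm_outer(1) infnorm_outer(1)] nonneg ab
  by (smt (verit) K0_def dist_Pair_same_snd divide_nonneg_pos mult_right_mono abs_ge_zero)

lemma GQ_corner_gap: "GQ (f (-a, a)) (g (-b, a)) \<le> \<delta> + Lg * (b - a)"
proof -
  have "GQ (f (-a, a)) (g (-b, a)) \<le> GQ (f (-a, a)) (g (-b, b)) + GQ (g (-b, b)) (g (-b, a))"
    by (rule GQ_triangle) (use ab size_f size_g infnorm_inner infnorm_outer in auto)
  moreover have "GQ (f (-a, a)) (g (-b, b)) \<le> \<delta>"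
    using f_close_g[OF infnorm_inner, of "-a"] ab by simp
  moreover have "GQ (g (-b, b)) (g (-b, a)) \<le> Lg * (b - a)"
    using lip_g[OF infnorm_outer(2) infnorm_outer(2), of b a] ab by (simp add: dist_Pair_same_fst)
  ultimately show ?thesis by linarith
qed

definition inner_edge :: "real \<Rightarrow> pt multiset" where
  "inner_edge u = (if u \<le> -a then AQ_geodesic (f (-a, a)) (g (-b, a)) ((- u - a) / (b - a)) else f (u, a))"

lemma size_corner: "size (g (-b, a)) = size (f (-a, a))"
  using size_f[OF infnorm_inner] size_g[OF infnorm_outer(2)] ab by simp

lemma size_inner_edge: "u \<in> {-b..a} \<Longrightarrow> size (inner_edge u) = Q"
  using size_AQ_geodesic[OF size_corner] size_f[OF infnorm_inner] ab by (auto simp: inner_edge_def)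

lemma inner_edge_eq_f: "u \<in> {-a..a} \<Longrightarrow> inner_edge u = f (u, a)"
  using AQ_geodesic_0[OF size_corner] by (auto simp: inner_edge_def)

lemma inner_edge_left: "inner_edge (-b) = g (-b, a)"
  using AQ_geodesic_1[OF size_corner] ab by (simp add: inner_edge_def)

lemma lipschitz_inner_edge:
  assumes "u \<in> {-b..a}" "u' \<in> {-b..a}"
  shows "GQ (inner_edge u) (inner_edge u') \<le> K0 * \<bar>u - u'\<bar>"
proof -
  have K: "Lg + \<delta> / (b - a) \<le> K0" "Lf \<le> K0" using nonneg ab by (auto simp: K0_def)
  have corner: "GQ (inner_edge v) (inner_edge v') \<le> K0 * \<bar>v - v'\<bar>"
    if "v \<in> {-b..-a}" "v' \<in> {-b..-a}" for v v'
  proof -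
    have "GQ (inner_edge v) (inner_edge v')
        \<le> \<bar>(- v - a) / (b - a) - (- v' - a) / (b - a)\<bar> * GQ (f (-a, a)) (g (-b, a))"
      using that GQ_AQ_geodesic[OF size_corner] by (simp add: inner_edge_def)
    also have "\<dots> \<le> \<bar>v - v'\<bar> / (b - a) * (\<delta> + Lg * (b - a))"
      using GQ_corner_gap ab GQ_nonneg[OF size_corner]
      by (intro mult_mono) (auto simp: diff_divide_distrib[symmetric] abs_minus_commute)
    also have "\<dots> = (Lg + \<delta> / (b - a)) * \<bar>v - v'\<bar>" using ab by (simp add: field_simps)
    also have "\<dots> \<le> K0 * \<bar>v - v'\<bar>" using K by (simp add: mult_right_mono)
    finally show ?thesis .
  qed
  have side: "GQ (inner_edge v) (inner_edge v') \<le> K0 * \<bar>v - v'\<bar>"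
    if "v \<in> {-a..a}" "v' \<in> {-a..a}" for v v'
    using lip_f[OF infnorm_inner infnorm_inner, of v v'] that inner_edge_eq_f K nonneg
    by (smt (verit) atLeastAtMost_iff dist_Pair_same_snd mult_right_mono abs_ge_zero)
  have mixed: "GQ (inner_edge v) (inner_edge v') \<le> K0 * \<bar>v - v'\<bar>"
    if "v \<in> {-b..-a}" "v' \<in> {-a..a}" for v v'
  proof -
    have "GQ (inner_edge v) (inner_edge v') \<le> GQ (inner_edge v) (inner_edge (-a)) + GQ (inner_edge (-a)) (inner_edge v')"
      by (rule GQ_triangle) (use size_inner_edge that ab in auto)
    also have "\<dots> \<le> K0 * \<bar>v + a\<bar> + K0 * \<bar>- a - v'\<bar>"
      using corner[OF that(1), of "-a"] side[OF _ that(2), of "-a"] ab by simp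
    also have "\<dots> = K0 * \<bar>v - v'\<bar>"
    proof -
      have "\<bar>v + a\<bar> = - a - v" "\<bar>- a - v'\<bar> = a + v'" "\<bar>v - v'\<bar> = v' - v" using that by auto
      then show ?thesis by (simp add: algebra_simps)
    qed
    finally show ?thesis .
  qed
  show ?thesis
  proof (cases "u \<le> -a"; cases "u' \<le> -a")
    assume "u \<le> -a" "\<not> u' \<le> -a"
    then show ?thesis using mixed assms by simp
  next
    assume "\<not> u \<le> -a" "u' \<le> -a"
    then show ?thesis
      using mixed[of u' u] assms GQ_sym[of "inner_edge u'" "inner_edge u"] size_inner_edge
      by (simp add: abs_minus_commute)
  qed (use corner side assms in auto)
qed

lemma GQ_inner_edge_outer:
  assumes u: "u \<in> {-b..a}"
  shows "GQ (inner_edge u) (g (u, b)) \<le> K0 * (b - a)"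
proof -
  have "K0 * (b - a) = Lf * (b - a) + 3 * Lg * (b - a) + \<delta>" using ab by (simp add: K0_def field_simps)
  moreover have "0 \<le> Lf * (b - a)" "0 \<le> Lg * (b - a)" using nonneg ab by simp_all
  moreover have "GQ (inner_edge u) (g (u, b)) \<le> \<delta> + 3 * Lg * (b - a)"
  proof (cases "u \<le> -a")
    case False
    then have u': "\<bar>u\<bar> \<le> a" using u by auto
    have "\<bar>b * u / a\<bar> \<le> b" using u' ab by (simp add: abs_mult divide_le_eq mult_left_mono)
    then have "GQ (f (u, a)) (g (u, b)) \<le> GQ (f (u, a)) (g (b * u / a, b)) + GQ (g (b * u / a, b)) (g (u, b))"
      using size_f[OF infnorm_inner[OF u']] size_g[OF infnorm_outer(1)] u' ab by (intro GQ_triangle) auto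
    moreover have "GQ (f (u, a)) (g (b * u / a, b)) \<le> \<delta>"
      using f_close_g[OF infnorm_inner[OF u']] ab by simp
    moreover have "GQ (g (b * u / a, b)) (g (u, b)) \<le> Lg * (b - a)"
    proof -
      have "b * u / a - u = (b - a) * (u / a)" using ab by (simp add: field_simps)
      then have "\<bar>b * u / a - u\<bar> = (b - a) * (\<bar>u\<bar> / a)" using ab by (simp add: abs_mult)
      also have "\<dots> \<le> b - a" using u' ab by (simp add: mult_left_le divide_le_eq)
      finally show ?thesis using GQ_g_outer[of "b * u / a" u] \<open>\<bar>b * u / a\<bar> \<le> b\<close> u' ab nonneg
        by (smt (verit) lip_g infnorm_outer(1) dist_Pair_same_snd mult_left_mono)
    qed
    moreover have "0 \<le> Lg * (b - a)" using nonneg ab by simp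
    ultimately have "GQ (f (u, a)) (g (u, b)) \<le> \<delta> + 3 * Lg * (b - a)" by linarith
    then show ?thesis using inner_edge_eq_f u' by (simp add: abs_le_iff)
  next
    case True
    define \<tau> where "\<tau> = (- u - a) / (b - a)"
    have \<tau>: "0 \<le> \<tau>" "\<tau> \<le> 1" using True u ab by (auto simp: \<tau>_def field_simps)
    have "GQ (inner_edge u) (g (-b, a)) \<le> \<bar>\<tau> - 1\<bar> * GQ (f (-a, a)) (g (-b, a))"
      using True GQ_AQ_geodesic[OF size_corner, of \<tau> 1] AQ_geodesic_1[OF size_corner]
      by (simp add: inner_edge_def \<tau>_def)
    also have "\<dots> \<le> 1 * (\<delta> + Lg * (b - a))"
      using \<tau> GQ_corner_gap GQ_nonneg[OF size_corner] by (intro mult_mono) auto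
    finally have "GQ (inner_edge u) (g (-b, a)) \<le> \<delta> + Lg * (b - a)" by simp
    moreover have "GQ (g (-b, a)) (g (u, b)) \<le> Lg * (2 * (b - a))"
    proof -
      have "dist (-b, a) (u, b) \<le> 2 * (b - a)"
        using dist_le_abs_fst_snd[of "(-b, a)" "(u, b)"] True u ab by auto
      moreover have "GQ (g (-b, a)) (g (u, b)) \<le> Lg * dist (-b, a) (u, b)"
        using u ab by (intro lip_g infnorm_outer) auto
      ultimately show ?thesis using nonneg by (smt (verit) mult_left_mono)
    qed
    moreover have "GQ (inner_edge u) (g (u, b)) \<le> GQ (inner_edge u) (g (-b, a)) + GQ (g (-b, a)) (g (u, b))"
      using size_inner_edge[OF u] size_g infnorm_outer u ab by (intro GQ_triangle) auto
    ultimately show ?thesis by linarith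
  qed
  ultimately show ?thesis by linarith
qed

definition rung :: "real \<Rightarrow> real \<Rightarrow> pt multiset" where
  "rung u t = (if u = -b then g (-b, t) else AQ_geodesic (inner_edge u) (g (u, b)) ((t - a) / (b - a)))"

context
  fixes u :: real
  assumes u: "u \<in> {-b..a}"
begin

lemma size_outer_inner_edge: "size (g (u, b)) = size (inner_edge u)"
proof -
  have "\<bar>u\<bar> \<le> b" using u ab by auto
  then show ?thesis using size_inner_edge[OF u] size_g[OF infnorm_outer(1)] by simp
qed

lemma size_rung: "t \<in> {a..b} \<Longrightarrow> size (rung u t) = Q"
  using size_AQ_geodesic[OF size_outer_inner_edge] size_inner_edge[OF u] size_g[OF infnorm_outer(2)] ab
  by (auto simp: rung_def)

lemma rung_inner: "rung u a = inner_edge u"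
  using AQ_geodesic_0[OF size_outer_inner_edge] inner_edge_left by (simp add: rung_def)

lemma rung_outer: "rung u b = g (u, b)"
  using AQ_geodesic_1[OF size_outer_inner_edge] ab by (simp add: rung_def)

lemma lipschitz_rung:
  assumes t: "t \<in> {a..b}" "t' \<in> {a..b}"
  shows "GQ (rung u t) (rung u t') \<le> K0 * \<bar>t - t'\<bar>"
proof (cases "u = -b")
  case True
  have "GQ (g (-b, t)) (g (-b, t')) \<le> Lg * \<bar>t - t'\<bar>"
    using lip_g[OF infnorm_outer(2) infnorm_outer(2), of t t'] t ab by (simp add: dist_Pair_same_fst)
  moreover have "Lg \<le> K0" using nonneg ab by (simp add: K0_def)
  ultimately show ?thesis using True by (simp add: rung_def) (smt (verit) mult_right_mono abs_ge_zero)
next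
  case False
  have "GQ (rung u t) (rung u t')
      \<le> \<bar>(t - a) / (b - a) - (t' - a) / (b - a)\<bar> * GQ (inner_edge u) (g (u, b))"
    using False GQ_AQ_geodesic[OF size_outer_inner_edge] by (simp add: rung_def)
  also have "\<bar>(t - a) / (b - a) - (t' - a) / (b - a)\<bar> = \<bar>t - t'\<bar> / (b - a)"
    using ab by (simp add: diff_divide_distrib[symmetric])
  also have "\<bar>t - t'\<bar> / (b - a) * GQ (inner_edge u) (g (u, b)) \<le> \<bar>t - t'\<bar> / (b - a) * (K0 * (b - a))"
    using GQ_inner_edge_outer[OF u] ab by (intro mult_left_mono) auto
  also have "\<dots> = K0 * \<bar>t - t'\<bar>" using ab by simp
  finally show ?thesis .
qed

lemma GQ_rung_inner_edge: "t \<in> {a..b} \<Longrightarrow> GQ (rung u t) (inner_edge u) \<le> K0 * (b - a)"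
  using lipschitz_rung[of t a] rung_inner ab K0_nonneg by (smt (verit) atLeastAtMost_iff mult_left_mono)

end

lemma cell_fill:
  assumes u: "-b \<le> u0" "u0 < u1" "u1 \<le> a" and width: "u1 - u0 \<le> b - a" "b - a \<le> 2 * (u1 - u0)"
  shows "\<exists>\<Phi>. (\<forall>x. size (\<Phi> x) = Q) \<and> (\<forall>y\<in>frontier (rect u0 u1 a b). \<Phi> y = rung (fst y) (snd y)) \<and>
    (\<forall>x x'. GQ (\<Phi> x) (\<Phi> x') \<le> 10 * cone_const Q * K0 * dist x x')"
proof -
  define \<phi> where "\<phi> y = rung (fst y) (snd y)" for y
  have cell: "fst y \<in> {-b..a}" "snd y \<in> {a..b}" if "y \<in> frontier (rect u0 u1 a b)" for y
    using that u unfolding mem_frontier_rect by (auto simp: rect_def)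
  have size: "\<forall>y\<in>frontier (rect u0 u1 a b). size (\<phi> y) = Q"
    using size_rung cell by (simp add: \<phi>_def)
  have center: "GQ (\<phi> y) (inner_edge u0) \<le> 2 * K0 * (b - a)" if "y \<in> frontier (rect u0 u1 a b)" for y
  proof -
    have "\<bar>fst y - u0\<bar> \<le> b - a" using that width unfolding mem_frontier_rect by (auto simp: rect_def)
    then have "GQ (inner_edge (fst y)) (inner_edge u0) \<le> K0 * (b - a)"
      using lipschitz_inner_edge[OF cell(1)[OF that], of u0] u K0_nonneg
      by (smt (verit) atLeastAtMost_iff mult_left_mono)
    moreover have "GQ (\<phi> y) (inner_edge u0) \<le> GQ (\<phi> y) (inner_edge (fst y)) + GQ (inner_edge (fst y)) (inner_edge u0)"
      using size that cell size_inner_edge u by (intro GQ_triangle) auto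
    ultimately show ?thesis using GQ_rung_inner_edge[OF cell[OF that]] by (simp add: \<phi>_def)
  qed
  have osc: "\<forall>y\<in>frontier (rect u0 u1 a b). \<forall>y'\<in>frontier (rect u0 u1 a b). GQ (\<phi> y) (\<phi> y') \<le> 4 * K0 * (b - a)"
  proof (intro ballI)
    fix y y' assume y: "y \<in> frontier (rect u0 u1 a b)" "y' \<in> frontier (rect u0 u1 a b)"
    have sz: "size (inner_edge u0) = Q" using size_inner_edge u by simp
    have "GQ (\<phi> y) (\<phi> y') \<le> GQ (\<phi> y) (inner_edge u0) + GQ (inner_edge u0) (\<phi> y')"
      using size y sz by (intro GQ_triangle) auto
    then show "GQ (\<phi> y) (\<phi> y') \<le> 4 * K0 * (b - a)"
      using center[OF y(1)] center[OF y(2)] GQ_sym[of "\<phi> y'" "inner_edge u0"] size y sz by simp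
  qed
  have sides: "\<forall>y\<in>S. \<forall>y'\<in>S. GQ (\<phi> y) (\<phi> y') \<le> K0 * dist y y'"
    if "S \<in> {{u0..u1} \<times> {a}, {u0..u1} \<times> {b}, {u0} \<times> {a..b}, {u1} \<times> {a..b}}" for S
  proof -
    have horizontal: "{u0..u1} \<subseteq> {-b..a}" using u by auto
    have "u0 \<in> {-b..a}" "u1 \<in> {-b..a}" using u by auto
    then show ?thesis using that horizontal ab
      by (auto simp: \<phi>_def dist_Pair_same_snd dist_Pair_same_fst rung_inner rung_outer
          lipschitz_inner_edge lipschitz_rung subset_iff abs_le_iff intro!: GQ_g_outer)
  qed
  have "\<forall>y\<in>frontier (rect u0 u1 a b). \<forall>y'\<in>frontier (rect u0 u1 a b).
      GQ (\<phi> y) (\<phi> y') \<le> (2 * K0 + 4 * K0 * (b - a) / min (u1 - u0) (b - a)) * dist y y'"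
    by (rule GQ_lipschitz_frontier_rect[OF u(2) ab(2) K0_nonneg _ size osc sides]) (use ab K0_nonneg in auto)
  moreover have "2 * K0 + 4 * K0 * (b - a) / min (u1 - u0) (b - a) \<le> 10 * K0"
  proof -
    have "(b - a) / (u1 - u0) \<le> 2" using width u by (simp add: pos_divide_le_eq)
    then have "4 * K0 * ((b - a) / (u1 - u0)) \<le> 4 * K0 * 2" using K0_nonneg by (intro mult_left_mono) auto
    then show ?thesis using width by (simp add: min_def)
  qed
  ultimately have lip: "\<forall>y\<in>frontier (rect u0 u1 a b). \<forall>y'\<in>frontier (rect u0 u1 a b).
      GQ (\<phi> y) (\<phi> y') \<le> 10 * K0 * dist y y'"
    by (smt (verit) mult_right_mono zero_le_dist)
  obtain \<Phi> where "\<forall>x. size (\<Phi> x) = Q" "\<forall>y\<in>frontier (rect u0 u1 a b). \<Phi> y = \<phi> y"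
    "\<forall>x x'. GQ (\<Phi> x) (\<Phi> x') \<le> cone_const Q * (10 * K0) * dist x x'"
    using rect_cone_extension[OF u(2) ab(2) _ _ _ size lip] width u K0_nonneg by auto
  then show ?thesis by (auto simp: \<phi>_def mult.assoc mult.left_commute)
qed

definition cell_count :: nat where
  "cell_count = nat \<lceil>(a + b) / (b - a)\<rceil>"

definition cell_width :: real where
  "cell_width = (a + b) / cell_count"

definition cell_edge :: "nat \<Rightarrow> real" where
  "cell_edge k = -b + k * cell_width"

lemma cell_count_width: "0 < cell_count" "(b - a) / 2 \<le> cell_width" "cell_width \<le> b - a"
proof -
  define q where "q = (a + b) / (b - a)"
  have q: "1 < q" "a + b = q * (b - a)" using ab by (auto simp: q_def field_simps)
  have N: "q \<le> cell_count" "cell_count < q + 1"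
    using q(1) unfolding cell_count_def q_def[symmetric] by linarith+
  then show N_pos: "0 < cell_count" using q(1) by simp
  have "q * (b - a) \<le> cell_count * (b - a)" using N ab by (intro mult_right_mono) auto
  then show "cell_width \<le> b - a" using N_pos q by (simp add: cell_width_def divide_le_eq mult.commute)
  have "real cell_count \<le> 2 * q" using N q by linarith
  then have "cell_count * (b - a) \<le> 2 * q * (b - a)" using ab by (intro mult_right_mono) auto
  then show "(b - a) / 2 \<le> cell_width" using N_pos q by (simp add: cell_width_def field_simps)
qed

lemma cell_width_pos: "0 < cell_width"
proof -
  have "0 < (b - a) / 2" using ab by simp
  then show ?thesis using cell_count_width(2) by linarith
qed

lemma cell_edge_simps: "cell_edge 0 = -b" "cell_edge cell_count = a"
  "cell_edge (Suc k) = cell_edge k + cell_width"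
proof -
  show "cell_edge 0 = -b" "cell_edge (Suc k) = cell_edge k + cell_width"
    by (simp_all add: cell_edge_def algebra_simps)
  show "cell_edge cell_count = a" using cell_count_width(1) by (simp add: cell_edge_def cell_width_def)
qed

lemma cell_edge_mono: "i \<le> j \<Longrightarrow> cell_edge i \<le> cell_edge j" "i < j \<Longrightarrow> cell_edge i < cell_edge j"
  using cell_width_pos by (simp_all add: cell_edge_def mult_right_mono)

lemma cell_edge_range: "k \<le> cell_count \<Longrightarrow> cell_edge k \<in> {-b..a}"
  using cell_edge_mono(1)[of 0 k] cell_edge_mono(1)[of k cell_count] cell_edge_simps by auto

lemma exists_cell:
  assumes "u \<in> {-b..a}"
  shows "\<exists>k<cell_count. cell_edge k \<le> u \<and> u \<le> cell_edge (Suc k)"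
proof -
  define v where "v = (u + b) / cell_width"
  have v: "0 \<le> v" "u = -b + v * cell_width"
    using assms cell_width_pos by (auto simp: v_def)
  have "v * cell_width \<le> real cell_count * cell_width"
    using assms v(2) cell_edge_simps(2) by (simp add: cell_edge_def)
  then have "v \<le> cell_count" using cell_width_pos by (simp add: mult_le_cancel_right)
  show ?thesis
  proof (cases "v < cell_count")
    case True
    define k where "k = nat \<lfloor>v\<rfloor>"
    have "k \<le> v" "v \<le> k + 1" using v(1) by (auto simp: k_def) linarith
    then have "k * cell_width \<le> v * cell_width" "v * cell_width \<le> (k + 1) * cell_width"
      using cell_width_pos by (auto intro: mult_right_mono)
    moreover have "\<lfloor>v\<rfloor> < int cell_count" using True by (simp add: floor_less_iff)
    then have "k < cell_count" using v(1) by (simp add: k_def nat_less_iff)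
    ultimately show ?thesis using v(2) by (intro exI[of _ k]) (auto simp: cell_edge_def)
  next
    case False
    then have "u = a" using \<open>v \<le> cell_count\<close> v(2) cell_edge_simps(2) by (simp add: cell_edge_def)
    then show ?thesis using cell_count_width(1) cell_edge_simps(2) cell_edge_mono(1)[of "cell_count - 1" cell_count]
      by (intro exI[of _ "cell_count - 1"]) auto
  qed
qed

lemma long_rect_fill:
  "\<exists>H. (\<forall>x\<in>rect (-b) a a b. size (H x) = Q) \<and>
    (\<forall>x\<in>rect (-b) a a b. \<forall>x'\<in>rect (-b) a a b. GQ (H x) (H x') \<le> 10 * cone_const Q * K0 * dist x x') \<and>
    (\<forall>y\<in>frontier (rect (-b) a a b). H y = rung (fst y) (snd y))"
proof -
  define C where "C k = rect (cell_edge k) (cell_edge (Suc k)) a b" for k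
  define U where "U = rect (-b) a a b"
  define K where "K = 10 * cone_const Q * K0"
  have "\<exists>\<Phi>. (\<forall>x. size (\<Phi> x) = Q) \<and> (\<forall>y\<in>frontier (C k). \<Phi> y = rung (fst y) (snd y)) \<and>
      (\<forall>x x'. GQ (\<Phi> x) (\<Phi> x') \<le> K * dist x x')" if "k < cell_count" for k
    unfolding C_def K_def
    using cell_edge_range[of k] cell_edge_range[of "Suc k"] that cell_count_width cell_width_pos cell_edge_simps(3)
    by (intro cell_fill) auto
  then obtain \<Phi> where \<Phi>: "\<And>k. k < cell_count \<Longrightarrow> (\<forall>x. size (\<Phi> k x) = Q) \<and>
      (\<forall>y\<in>frontier (C k). \<Phi> k y = rung (fst y) (snd y)) \<and> (\<forall>x x'. GQ (\<Phi> k x) (\<Phi> k x') \<le> K * dist x x')"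
    by metis
  have C_sub: "C k \<subseteq> U" if "k < cell_count" for k
    using cell_edge_range[of k] cell_edge_range[of "Suc k"] that by (auto simp: C_def U_def rect_def)
  have cover: "\<exists>k<cell_count. x \<in> C k" if "x \<in> U" for x
    using exists_cell[of "fst x"] that by (force simp: C_def U_def rect_def)
  have agree: "\<Phi> j x = \<Phi> k x" if "j < k" "k < cell_count" "x \<in> C j" "x \<in> C k" for j k x
  proof -
    have "cell_edge (Suc j) \<le> cell_edge k" using that(1) cell_edge_mono(1) by simp
    then have "fst x = cell_edge (Suc j)" "fst x = cell_edge k" using that(3,4) by (auto simp: C_def rect_def)
    then have "x \<in> frontier (C j)" "x \<in> frontier (C k)" using that(3,4) by (simp_all add: C_def mem_frontier_rect)
    then show ?thesis using \<Phi>[of j] \<Phi>[of k] that(1,2) by (metis (no_types) order.strict_trans)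
  qed
  define H where "H x = \<Phi> (SOME k. k < cell_count \<and> x \<in> C k) x" for x
  have H: "H x = \<Phi> k x" if "k < cell_count" "x \<in> C k" for k x
  proof -
    define j where "j = (SOME k. k < cell_count \<and> x \<in> C k)"
    have j: "j < cell_count" "x \<in> C j"
      using someI[of "\<lambda>k. k < cell_count \<and> x \<in> C k" k] that by (simp_all add: j_def)
    have "\<Phi> j x = \<Phi> k x"
    proof (cases j k rule: linorder_cases)
      case less
      show ?thesis by (rule agree[OF less that(1) j(2) that(2)])
    next
      case greater
      then show ?thesis using agree[OF greater j(1) that(2) j(2)] by simp
    qed simp
    then show ?thesis unfolding H_def j_def[symmetric] .
  qed
  have size_H: "\<forall>x\<in>U. size (H x) = Q"
  proof
    fix x assume "x \<in> U"
    then obtain k where k: "k < cell_count" "x \<in> C k" using cover by blast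
    then show "size (H x) = Q" using H[OF k] \<Phi>[OF k(1)] by (metis (no_types))
  qed
  have "GQ (H x) (H x') \<le> K * dist x x'" if "x \<in> U" "x' \<in> U" for x x'
  proof (rule GQ_lipschitz_convex_glue[where F="C ` {..<cell_count}" and S=U and Q=Q])
    show "convex U" by (simp add: U_def rect_def convex_Times)
    show "\<forall>P\<in>C ` {..<cell_count}. closed P" by (auto simp: C_def rect_def intro!: closed_Times)
    show "U \<subseteq> \<Union> (C ` {..<cell_count})" using cover by blast
    show "0 \<le> K" using cone_const_pos[of Q] K0_nonneg by (simp add: K_def)
    show "\<forall>P\<in>C ` {..<cell_count}. \<forall>x\<in>P \<inter> U. \<forall>y\<in>P \<inter> U. GQ (H x) (H y) \<le> K * dist x y"
    proof (intro ballI)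
      fix P x y assume "P \<in> C ` {..<cell_count}" "x \<in> P \<inter> U" "y \<in> P \<inter> U"
      then obtain k where k: "k < cell_count" "x \<in> C k" "y \<in> C k" by auto
      then show "GQ (H x) (H y) \<le> K * dist x y" using H[OF k(1,2)] H[OF k(1,3)] \<Phi>[OF k(1)] by (metis (no_types))
    qed
  qed (use size_H that in auto)
  moreover have "H y = rung (fst y) (snd y)" if "y \<in> frontier U" for y
  proof -
    have "y \<in> U" using that by (simp add: U_def mem_frontier_rect)
    then obtain k where k: "k < cell_count" "y \<in> C k" using cover by blast
    have "cell_edge k \<le> -b \<longrightarrow> cell_edge k = -b" "a \<le> cell_edge (Suc k) \<longrightarrow> cell_edge (Suc k) = a"
      using cell_edge_range[of k] cell_edge_range[of "Suc k"] k(1) by auto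
    then have "y \<in> frontier (C k)" using that k(2) unfolding C_def U_def mem_frontier_rect by (auto simp: rect_def)
    then show ?thesis using H[OF k] \<Phi>[OF k(1)] by (metis (no_types))
  qed
  ultimately show ?thesis using size_H unfolding U_def K_def by (intro exI[of _ H]) blast
qed

theorem annulus_piece:
  "\<exists>H. (\<forall>x\<in>rect (-b) a a b. size (H x) = Q) \<and>
    (\<forall>x\<in>rect (-b) a a b. \<forall>x'\<in>rect (-b) a a b.
      GQ (H x) (H x') \<le> 10 * cone_const Q * (Lf + 3 * Lg + \<delta> / (b - a)) * dist x x') \<and>
    (\<forall>u\<in>{-a..a}. H (u, a) = f (u, a)) \<and>
    (\<forall>t\<in>{a..b}. H (-t, a) = AQ_geodesic (f (-a, a)) (g (-b, a)) ((t - a) / (b - a))) \<and>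
    (\<forall>t\<in>{a..b}. H (a, t) = AQ_geodesic (f (a, a)) (g (a, b)) ((t - a) / (b - a))) \<and>
    (\<forall>u\<in>{-b..a}. H (u, b) = g (u, b)) \<and> (\<forall>t\<in>{a..b}. H (-b, t) = g (-b, t))"
proof -
  obtain H where H: "\<forall>x\<in>rect (-b) a a b. size (H x) = Q"
    "\<forall>x\<in>rect (-b) a a b. \<forall>x'\<in>rect (-b) a a b. GQ (H x) (H x') \<le> 10 * cone_const Q * K0 * dist x x'"
    and boundary: "\<forall>y\<in>frontier (rect (-b) a a b). H y = rung (fst y) (snd y)"
    using long_rect_fill by blast
  have on_frontier: "(u, t) \<in> frontier (rect (-b) a a b)"
    if "u \<in> {-b..a}" "t \<in> {a..b}" "u = -b \<or> u = a \<or> t = a \<or> t = b" for u t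
    using that unfolding mem_frontier_rect by (simp add: rect_def)
  have "H (u, a) = f (u, a)" if "u \<in> {-a..a}" for u
    using boundary on_frontier[of u a] that ab rung_inner[of u] inner_edge_eq_f[OF that] by simp
  moreover have "H (-t, a) = AQ_geodesic (f (-a, a)) (g (-b, a)) ((t - a) / (b - a))" if "t \<in> {a..b}" for t
    using boundary on_frontier[of "-t" a] that ab rung_inner[of "-t"] by (simp add: inner_edge_def)
  moreover have "H (a, t) = AQ_geodesic (f (a, a)) (g (a, b)) ((t - a) / (b - a))" if "t \<in> {a..b}" for t
    using boundary on_frontier[of a t] that ab inner_edge_eq_f[of a] by (simp add: rung_def)
  moreover have "H (u, b) = g (u, b)" if "u \<in> {-b..a}" for u
    using boundary on_frontier[of u b] that ab rung_outer[OF that] by simp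
  moreover have "H (-b, t) = g (-b, t)" if "t \<in> {a..b}" for t
    using boundary on_frontier[of "-b" t] that ab by (simp add: rung_def)
  ultimately show ?thesis using H unfolding K0_def by (intro exI[of _ H]) blast
qed

end

definition rot90 :: "pt \<Rightarrow> pt" where
  "rot90 x = (- snd x, fst x)"

lemma rot90_funpow_4: "rot90 ^^ 4 = id"
  by (simp add: fun_eq_iff rot90_def numeral_eq_Suc)

lemma rot90_funpow_inverse:
  assumes "j \<le> 4" shows "(rot90 ^^ j) ((rot90 ^^ (4 - j)) x) = x"
proof -
  have "rot90 ^^ j \<circ> rot90 ^^ (4 - j) = id" using funpow_add[of j "4 - j" rot90] rot90_funpow_4 assms by simp
  then show ?thesis by (metis comp_apply id_apply)
qed

lemma infnorm_rot90_funpow: "infnorm ((rot90 ^^ j) x) = infnorm x"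
  by (induction j arbitrary: x) (auto simp: infnorm_pt rot90_def max.commute)

lemma dist_rot90_funpow: "dist ((rot90 ^^ j) x) ((rot90 ^^ j) y) = dist x y"
  by (induction j) (auto simp: rot90_def dist_Pair_Pair dist_real_def dist_prod_def abs_minus_commute add.commute)

lemma rot90_funpow_scaleR: "(rot90 ^^ j) (c *\<^sub>R x) = c *\<^sub>R (rot90 ^^ j) x"
  by (induction j) (auto simp: rot90_def)

lemma rot90_funpow_inj: "(rot90 ^^ j) x = (rot90 ^^ j) y \<Longrightarrow> x = y"
  using dist_rot90_funpow[of j x y] by simp

lemma continuous_rot90_funpow: "continuous (at x) (rot90 ^^ j)"
proof (induction j arbitrary: x)
  case (Suc j)
  have "continuous (at y) rot90" for y unfolding rot90_def by (intro continuous_intros)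
  then show ?case using Suc continuous_at_compose[of x "rot90 ^^ j" rot90] by (simp add: o_def)
qed simp

lemma square_eq: "rect (-c) c (-c) c = {x. infnorm x \<le> c}"
  by (auto simp: rect_def infnorm_pt abs_le_iff)

lemma frontier_square_eq: "0 < c \<Longrightarrow> frontier (rect (-c) c (-c) c) = {x. infnorm x = c}"
  unfolding set_eq_iff mem_frontier_rect by (auto simp: rect_def infnorm_pt max_def abs_if)

lemma rect_rot90_overlap:
  assumes "0 < a" "i < 4" "j < 4" "i \<noteq> j" "y \<in> rect (-b) a a b" "y' \<in> rect (-b) a a b"
    and "(rot90 ^^ i) y = (rot90 ^^ j) y'"
  shows "(rot90 ^^ j = rot90 ^^ i \<circ> rot90 \<and> y = rot90 y') \<or> (rot90 ^^ i = rot90 ^^ j \<circ> rot90 \<and> y' = rot90 y)"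
proof -
  have "i \<in> {0, 1, 2, 3}" "j \<in> {0, 1, 2, 3}" using assms(2,3) by auto
  then show ?thesis using assms(1,4-7)
    by (auto simp: rect_def rot90_def fun_eq_iff numeral_eq_Suc)
qed

lemma (in annulus_data) annulus_data_rot90: "annulus_data a b Q (f \<circ> (rot90 ^^ j)) (g \<circ> (rot90 ^^ j)) Lf Lg \<delta>"
proof
  fix x y :: pt assume x: "infnorm x = a" and y: "infnorm y = a"
  show "size ((f \<circ> (rot90 ^^ j)) x) = Q" using size_f x by (simp add: infnorm_rot90_funpow)
  show "GQ ((f \<circ> (rot90 ^^ j)) x) ((f \<circ> (rot90 ^^ j)) y) \<le> Lf * dist x y"
    using lip_f[of "(rot90 ^^ j) x" "(rot90 ^^ j) y"] x y by (simp add: infnorm_rot90_funpow dist_rot90_funpow)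
  show "GQ ((f \<circ> (rot90 ^^ j)) x) ((g \<circ> (rot90 ^^ j)) ((b / a) *\<^sub>R x)) \<le> \<delta>"
    using f_close_g[of "(rot90 ^^ j) x"] x by (simp add: infnorm_rot90_funpow rot90_funpow_scaleR)
next
  fix x y :: pt assume x: "infnorm x = b" and y: "infnorm y = b"
  show "size ((g \<circ> (rot90 ^^ j)) x) = Q" using size_g x by (simp add: infnorm_rot90_funpow)
  show "GQ ((g \<circ> (rot90 ^^ j)) x) ((g \<circ> (rot90 ^^ j)) y) \<le> Lg * dist x y"
    using lip_g[of "(rot90 ^^ j) x" "(rot90 ^^ j) y"] x y by (simp add: infnorm_rot90_funpow dist_rot90_funpow)
qed (use ab nonneg in auto)

lemma (in annulus_data) hole_fill:
  "\<exists>\<Phi>. (\<forall>x. size (\<Phi> x) = Q) \<and> (\<forall>x. infnorm x = a \<longrightarrow> \<Phi> x = f x) \<and>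
    (\<forall>x x'. GQ (\<Phi> x) (\<Phi> x') \<le> cone_const Q * Lf * dist x x')"
proof -
  have "\<forall>y\<in>frontier (rect (-a) a (-a) a). size (f y) = Q"
    "\<forall>y\<in>frontier (rect (-a) a (-a) a). \<forall>y'\<in>frontier (rect (-a) a (-a) a). GQ (f y) (f y') \<le> Lf * dist y y'"
    using size_f lip_f frontier_square_eq[OF ab(1)] by auto
  from rect_cone_extension[OF _ _ _ _ nonneg(1) this] show ?thesis
    using ab frontier_square_eq[OF ab(1)] by auto
qed

locale annulus_glue = annulus_data +
  fixes Hs :: "nat \<Rightarrow> pt \<Rightarrow> pt multiset" and \<Phi> :: "pt \<Rightarrow> pt multiset"
  assumes size_Hs: "\<And>j x. x \<in> rect (-b) a a b \<Longrightarrow> size (Hs j x) = Q"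
    and lip_Hs: "\<And>j x x'. x \<in> rect (-b) a a b \<Longrightarrow> x' \<in> rect (-b) a a b \<Longrightarrow>
      GQ (Hs j x) (Hs j x') \<le> 10 * cone_const Q * K0 * dist x x'"
    and Hs_inner: "\<And>j u. u \<in> {-a..a} \<Longrightarrow> Hs j (u, a) = f ((rot90 ^^ j) (u, a))"
    and Hs_corner: "\<And>j t. t \<in> {a..b} \<Longrightarrow>
      Hs j (-t, a) = AQ_geodesic (f ((rot90 ^^ j) (-a, a))) (g ((rot90 ^^ j) (-b, a))) ((t - a) / (b - a))"
    and Hs_seam: "\<And>j t. t \<in> {a..b} \<Longrightarrow>
      Hs j (a, t) = AQ_geodesic (f ((rot90 ^^ j) (a, a))) (g ((rot90 ^^ j) (a, b))) ((t - a) / (b - a))"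
    and Hs_outer: "\<And>j u. u \<in> {-b..a} \<Longrightarrow> Hs j (u, b) = g ((rot90 ^^ j) (u, b))"
    and Hs_left: "\<And>j t. t \<in> {a..b} \<Longrightarrow> Hs j (-b, t) = g ((rot90 ^^ j) (-b, t))"
    and size_\<Phi>: "\<And>x. size (\<Phi> x) = Q"
    and \<Phi>_inner: "\<And>x. infnorm x = a \<Longrightarrow> \<Phi> x = f x"
    and lip_\<Phi>: "\<And>x x'. GQ (\<Phi> x) (\<Phi> x') \<le> cone_const Q * Lf * dist x x'"
begin

definition piece :: "nat \<Rightarrow> pt set" where
  "piece j = (rot90 ^^ (4 - j)) -` rect (-b) a a b"

lemma seam_agree:
  assumes "rot90 ^^ j = rot90 ^^ i \<circ> rot90" "y = rot90 y'" "y \<in> rect (-b) a a b" "y' \<in> rect (-b) a a b"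
  shows "Hs i y = Hs j y'"
proof -
  obtain t where t: "y' = (a, t)" "t \<in> {a..b}" "y = (-t, a)"
    using assms(2-4) by (cases y') (auto simp: rot90_def rect_def)
  have "(rot90 ^^ j) (a, a) = (rot90 ^^ i) (-a, a)" "(rot90 ^^ j) (a, b) = (rot90 ^^ i) (-b, a)"
    using assms(1) by (simp_all add: rot90_def)
  then show ?thesis using Hs_corner[OF t(2)] Hs_seam[OF t(2)] t by simp
qed

lemma pieces_agree:
  assumes "i < 4" "j < 4" "x \<in> piece i" "x \<in> piece j"
  shows "Hs i ((rot90 ^^ (4 - i)) x) = Hs j ((rot90 ^^ (4 - j)) x)"
proof (cases "i = j")
  case False
  define y y' where "y = (rot90 ^^ (4 - i)) x" and "y' = (rot90 ^^ (4 - j)) x"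
  have U: "y \<in> rect (-b) a a b" "y' \<in> rect (-b) a a b" using assms by (auto simp: piece_def y_def y'_def)
  have "(rot90 ^^ i) y = (rot90 ^^ j) y'" using rot90_funpow_inverse assms by (simp add: y_def y'_def)
  then show ?thesis
    using rect_rot90_overlap[OF ab(1) assms(1,2) False U] seam_agree U unfolding y_def y'_def by metis
qed simp

lemma hole_agree:
  assumes "j < 4" "x \<in> piece j" "infnorm x \<le> a"
  shows "\<Phi> x = Hs j ((rot90 ^^ (4 - j)) x)"
proof -
  define y where "y = (rot90 ^^ (4 - j)) x"
  have "y \<in> rect (-b) a a b" "infnorm y \<le> a"
    using assms by (simp_all add: piece_def y_def infnorm_rot90_funpow)
  then have "snd y = a" "fst y \<in> {-a..a}" by (auto simp: rect_def infnorm_pt)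
  then have "Hs j y = f ((rot90 ^^ j) y)" using Hs_inner by (metis prod.collapse)
  moreover have "(rot90 ^^ j) y = x" using rot90_funpow_inverse assms(1) by (simp add: y_def)
  moreover have "infnorm y = a" using \<open>snd y = a\<close> \<open>fst y \<in> {-a..a}\<close> ab by (simp add: infnorm_pt max_def abs_le_iff)
  then have "infnorm x = a" using infnorm_rot90_funpow[of "4 - j" x] by (simp add: y_def)
  ultimately show ?thesis using \<Phi>_inner y_def by simp
qed

definition glued :: "pt \<Rightarrow> pt multiset" where
  "glued x = (if infnorm x \<le> a then \<Phi> x
     else Hs (SOME j. j < 4 \<and> x \<in> piece j) ((rot90 ^^ (4 - (SOME j. j < 4 \<and> x \<in> piece j))) x))"

lemma glued_piece:
  assumes "j < 4" "x \<in> piece j"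
  shows "glued x = Hs j ((rot90 ^^ (4 - j)) x)"
proof (cases "infnorm x \<le> a")
  case True
  then show ?thesis using hole_agree[OF assms] by (simp add: glued_def)
next
  case False
  define i where "i = (SOME j. j < 4 \<and> x \<in> piece j)"
  have "i < 4 \<and> x \<in> piece i" unfolding i_def by (rule someI[of _ j]) (use assms in simp)
  then show ?thesis using False pieces_agree[OF _ assms(1) _ assms(2), of i] by (simp add: glued_def i_def[symmetric])
qed

lemma piece_cover:
  assumes "infnorm x \<le> b" "\<not> infnorm x \<le> a"
  shows "\<exists>j<4. x \<in> piece j"
proof -
  obtain x1 x2 where x: "x = (x1, x2)" by (cases x)
  have bounds: "-b \<le> x1" "x1 \<le> b" "-b \<le> x2" "x2 \<le> b" "a < x1 \<or> x1 < -a \<or> a < x2 \<or> x2 < -a"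
    using assms by (auto simp: x infnorm_pt abs_le_iff not_le)
  have piece_iff: "x \<in> piece 0 \<longleftrightarrow> x1 \<in> {-b..a} \<and> x2 \<in> {a..b}" "x \<in> piece 1 \<longleftrightarrow> x2 \<in> {-b..a} \<and> - x1 \<in> {a..b}"
    "x \<in> piece 2 \<longleftrightarrow> - x1 \<in> {-b..a} \<and> - x2 \<in> {a..b}" "x \<in> piece 3 \<longleftrightarrow> - x2 \<in> {-b..a} \<and> x1 \<in> {a..b}"
    by (simp_all add: x piece_def rect_def rot90_def numeral_eq_Suc)
  consider "x1 \<le> a" "a \<le> x2" | "x2 \<le> a" "x1 \<le> -a" | "-a \<le> x1" "x2 \<le> -a" | "-a \<le> x2" "a \<le> x1"
    using bounds(5) ab by (smt (verit))
  then show ?thesis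
  proof cases
    case 1
    then have "x \<in> piece 0" using piece_iff(1) bounds by simp
    then show ?thesis by (intro exI[of _ 0]) simp
  next
    case 2
    then have "x \<in> piece 1" using piece_iff(2) bounds by simp
    then show ?thesis by (intro exI[of _ 1]) simp
  next
    case 3
    then have "x \<in> piece 2" using piece_iff(3) bounds by simp
    then show ?thesis by (intro exI[of _ 2]) simp
  next
    case 4
    then have "x \<in> piece 3" using piece_iff(4) bounds by simp
    then show ?thesis by (intro exI[of _ 3]) simp
  qed
qed

lemma size_glued: "infnorm x \<le> b \<Longrightarrow> size (glued x) = Q"
proof (cases "infnorm x \<le> a")
  case False
  assume "infnorm x \<le> b"
  then obtain j where "j < 4" "x \<in> piece j" using piece_cover False by blast
  then show ?thesis using glued_piece size_Hs by (simp add: piece_def)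
qed (simp add: glued_def size_\<Phi>)

lemma lipschitz_glued:
  assumes "infnorm x \<le> b" "infnorm y \<le> b"
  shows "GQ (glued x) (glued y) \<le> 10 * cone_const Q * K0 * dist x y"
proof (rule GQ_lipschitz_convex_glue[where F="insert (rect (-a) a (-a) a) (piece ` {..<4})"
      and S="rect (-b) b (-b) b" and Q=Q])
  show "convex (rect (-b) b (-b) b)" by (simp add: rect_def convex_Times)
  have "closed (piece j)" for j
    unfolding piece_def by (intro continuous_closed_vimage continuous_rot90_funpow) (simp add: rect_def closed_Times)
  then show "\<forall>P\<in>insert (rect (-a) a (-a) a) (piece ` {..<4}). closed P" by (auto simp: rect_def closed_Times)
  show "rect (-b) b (-b) b \<subseteq> \<Union> (insert (rect (-a) a (-a) a) (piece ` {..<4}))"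
    using piece_cover unfolding square_eq by blast
  show "0 \<le> 10 * cone_const Q * K0" using cone_const_pos[of Q] K0_nonneg by simp
  have "cone_const Q * Lf \<le> 10 * cone_const Q * K0"
    using cone_const_pos[of Q] nonneg ab by (simp add: K0_def)
  then have hole: "GQ (glued x) (glued x') \<le> 10 * cone_const Q * K0 * dist x x'"
    if "infnorm x \<le> a" "infnorm x' \<le> a" for x x'
    using that lip_\<Phi>[of x x'] by (simp add: glued_def) (smt (verit) mult_right_mono zero_le_dist)
  have piece: "GQ (glued x) (glued x') \<le> 10 * cone_const Q * K0 * dist x x'"
    if "j < 4" "x \<in> piece j" "x' \<in> piece j" for j x x'
    using that glued_piece lip_Hs[of "(rot90 ^^ (4 - j)) x" "(rot90 ^^ (4 - j)) x'" j]
    by (simp add: piece_def dist_rot90_funpow)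
  show "\<forall>P\<in>insert (rect (-a) a (-a) a) (piece ` {..<4}). \<forall>x\<in>P \<inter> rect (-b) b (-b) b.
      \<forall>x'\<in>P \<inter> rect (-b) b (-b) b. GQ (glued x) (glued x') \<le> 10 * cone_const Q * K0 * dist x x'"
    using hole piece unfolding square_eq by auto
  show "\<forall>x\<in>rect (-b) b (-b) b. size (glued x) = Q" using size_glued by (simp add: square_eq)
qed (use assms in \<open>simp_all add: square_eq\<close>)

lemma glued_outer:
  assumes "infnorm x = b"
  shows "glued x = g x"
proof -
  have "infnorm x \<le> b" "\<not> infnorm x \<le> a" using assms ab by simp_all
  then obtain j where j: "j < 4" "x \<in> piece j" using piece_cover by blast
  define y where "y = (rot90 ^^ (4 - j)) x"
  have y: "y \<in> rect (-b) a a b" "infnorm y = b" using j assms by (simp_all add: y_def piece_def infnorm_rot90_funpow)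
  then have "snd y = b \<or> fst y = -b" using ab by (auto simp: rect_def infnorm_pt max_def abs_if split: if_splits)
  then have "Hs j y = g ((rot90 ^^ j) y)"
    using y(1) Hs_outer Hs_left by (auto simp: rect_def)
  then show ?thesis using glued_piece[OF j] rot90_funpow_inverse j(1) by (simp add: y_def)
qed

lemma glued_inner: "infnorm x = a \<Longrightarrow> glued x = f x"
  by (simp add: glued_def \<Phi>_inner)

end

theorem (in annulus_data) annulus_extension:
  "\<exists>h. (\<forall>x. infnorm x \<le> b \<longrightarrow> size (h x) = Q) \<and> (\<forall>x. infnorm x = b \<longrightarrow> h x = g x) \<and>
    (\<forall>x. infnorm x = a \<longrightarrow> h x = f x) \<and>
    (\<forall>x y. infnorm x \<le> b \<longrightarrow> infnorm y \<le> b \<longrightarrow> GQ (h x) (h y) \<le> 10 * cone_const Q * K0 * dist x y)"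
proof -
  obtain \<Phi> where hole: "\<forall>x. size (\<Phi> x) = Q" "\<forall>x. infnorm x = a \<longrightarrow> \<Phi> x = f x"
    "\<forall>x x'. GQ (\<Phi> x) (\<Phi> x') \<le> cone_const Q * Lf * dist x x'"
    using hole_fill by blast
  have "\<forall>j. \<exists>H. (\<forall>x\<in>rect (-b) a a b. size (H x) = Q) \<and>
    (\<forall>x\<in>rect (-b) a a b. \<forall>x'\<in>rect (-b) a a b. GQ (H x) (H x') \<le> 10 * cone_const Q * K0 * dist x x') \<and>
    (\<forall>u\<in>{-a..a}. H (u, a) = f ((rot90 ^^ j) (u, a))) \<and>
    (\<forall>t\<in>{a..b}. H (-t, a) = AQ_geodesic (f ((rot90 ^^ j) (-a, a))) (g ((rot90 ^^ j) (-b, a))) ((t - a) / (b - a))) \<and>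
    (\<forall>t\<in>{a..b}. H (a, t) = AQ_geodesic (f ((rot90 ^^ j) (a, a))) (g ((rot90 ^^ j) (a, b))) ((t - a) / (b - a))) \<and>
    (\<forall>u\<in>{-b..a}. H (u, b) = g ((rot90 ^^ j) (u, b))) \<and> (\<forall>t\<in>{a..b}. H (-b, t) = g ((rot90 ^^ j) (-b, t)))"
    unfolding K0_def by (rule allI, rule annulus_data.annulus_piece[OF annulus_data_rot90, unfolded comp_apply])
  from choice[OF this] obtain Hs where Hs: "\<forall>j. (\<forall>x\<in>rect (-b) a a b. size (Hs j x) = Q) \<and>
    (\<forall>x\<in>rect (-b) a a b. \<forall>x'\<in>rect (-b) a a b. GQ (Hs j x) (Hs j x') \<le> 10 * cone_const Q * K0 * dist x x') \<and>
    (\<forall>u\<in>{-a..a}. Hs j (u, a) = f ((rot90 ^^ j) (u, a))) \<and>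
    (\<forall>t\<in>{a..b}. Hs j (-t, a) = AQ_geodesic (f ((rot90 ^^ j) (-a, a))) (g ((rot90 ^^ j) (-b, a))) ((t - a) / (b - a))) \<and>
    (\<forall>t\<in>{a..b}. Hs j (a, t) = AQ_geodesic (f ((rot90 ^^ j) (a, a))) (g ((rot90 ^^ j) (a, b))) ((t - a) / (b - a))) \<and>
    (\<forall>u\<in>{-b..a}. Hs j (u, b) = g ((rot90 ^^ j) (u, b))) \<and> (\<forall>t\<in>{a..b}. Hs j (-b, t) = g ((rot90 ^^ j) (-b, t)))"
    ..
  interpret annulus_glue a b Q f g Lf Lg \<delta> Hs \<Phi>
    by (intro annulus_glue.intro annulus_data_axioms annulus_glue_axioms.intro) (use Hs in \<open>simp_all add: hole[rule_format]\<close>)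
  show ?thesis
    by (intro exI[of _ glued] conjI allI impI size_glued glued_outer glued_inner lipschitz_glued)
qed

lemma sqD_eq:
  assumes "0 < s"
  shows "sqD s = {x. infnorm x < s / 2}" "closure (sqD s) = {x. infnorm x \<le> s / 2}"
    "frontier (sqD s) = {x. infnorm x = s / 2}"
proof -
  show sqD: "sqD s = {x. infnorm x < s / 2}" by (auto simp: sqD_def infnorm_pt abs_less_iff)
  have "closure (sqD s) = rect (- (s / 2)) (s / 2) (- (s / 2)) (s / 2)"
    using assms by (simp add: sqD_def rect_def closure_Times)
  then show closure: "closure (sqD s) = {x. infnorm x \<le> s / 2}" by (simp add: square_eq)
  have "open (sqD s)" by (simp add: sqD_def open_Times)
  then show "frontier (sqD s) = {x. infnorm x = s / 2}"
    using closure sqD by (auto simp: frontier_def interior_open)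
qed

lemma lipschitz_AQ_nonneg:
  assumes "lipschitz_AQ A h L" "x \<in> A" "y \<in> A" "x \<noteq> y" "size (h x) = size (h y)"
  shows "0 \<le> L"
proof -
  have "GQ (h x) (h y) \<le> L * dist x y" using assms unfolding lipschitz_AQ_def by blast
  moreover have "0 \<le> GQ (h x) (h y)" using GQ_nonneg assms(5) by simp
  ultimately have "0 \<le> L * dist x y" by linarith
  then show ?thesis using assms(4) by (simp add: zero_le_mult_iff)
qed

lemma annulus_data_intro:
  assumes ab: "0 < a" "a < b"
    and size_f: "\<forall>x. infnorm x = a \<longrightarrow> size (f x) = Q" and size_g: "\<forall>x. infnorm x = b \<longrightarrow> size (g x) = Q"
    and lip_f: "lipschitz_AQ {x. infnorm x = a} f Lf" and lip_g: "lipschitz_AQ {x. infnorm x = b} g Lg"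
  shows "annulus_data a b Q f g Lf Lg (SUP x\<in>{x. infnorm x = a}. GQ (f x) (g ((b / a) *\<^sub>R x)))"
proof -
  have on_square: "infnorm (c, 0::real) = c" "infnorm (-c, 0::real) = c" "(c, 0) \<noteq> (-c, 0::real)"
    if "0 < c" for c :: real
    using that by (auto simp: infnorm_pt max_def)
  have Lf: "0 \<le> Lf" using lipschitz_AQ_nonneg[OF lip_f, of "(a, 0)" "(-a, 0)"] on_square[OF ab(1)] size_f by simp
  have Lg: "0 \<le> Lg" using lipschitz_AQ_nonneg[OF lip_g, of "(b, 0)" "(-b, 0)"] on_square[of b] ab size_g by simp
  have scale: "infnorm ((b / a) *\<^sub>R x) = b" if "infnorm x = a" for x
    using that ab by (simp add: infnorm_mul)
  have diam: "dist x y \<le> 4 * c" if "infnorm x = c" "infnorm y = c" for x y :: pt and c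
    using that dist_le_abs_fst_snd[of x y] by (auto simp: infnorm_pt max_def abs_le_iff split: if_splits)
  define p where "p = (a, 0::real)"
  have p: "infnorm p = a" using ab by (simp add: p_def infnorm_pt)
  have gap: "GQ (f x) (g ((b / a) *\<^sub>R x)) \<le> Lf * (4 * a) + GQ (f p) (g ((b / a) *\<^sub>R p)) + Lg * (4 * b)"
    if x: "infnorm x = a" for x
  proof -
    have "GQ (f x) (g ((b / a) *\<^sub>R x))
        \<le> GQ (f x) (f p) + GQ (f p) (g ((b / a) *\<^sub>R p)) + GQ (g ((b / a) *\<^sub>R p)) (g ((b / a) *\<^sub>R x))"
      using size_f size_g x p scale GQ_triangle
      by (smt (verit, best))
    moreover have "GQ (f x) (f p) \<le> Lf * (4 * a)"
      using lip_f x p diam[OF x p] Lf unfolding lipschitz_AQ_def by (smt (verit) mem_Collect_eq mult_left_mono)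
    moreover have "GQ (g ((b / a) *\<^sub>R p)) (g ((b / a) *\<^sub>R x)) \<le> Lg * (4 * b)"
      using lip_g scale[OF x] scale[OF p] diam[OF scale[OF p] scale[OF x]] Lg unfolding lipschitz_AQ_def
      by (smt (verit) mem_Collect_eq mult_left_mono)
    ultimately show ?thesis by linarith
  qed
  have sup: "GQ (f x) (g ((b / a) *\<^sub>R x)) \<le> (SUP x\<in>{x. infnorm x = a}. GQ (f x) (g ((b / a) *\<^sub>R x)))"
    if "infnorm x = a" for x
    using that gap by (intro cSUP_upper bdd_aboveI2) auto
  moreover have "0 \<le> GQ (f p) (g ((b / a) *\<^sub>R p))" using size_f size_g p scale GQ_nonneg by metis
  ultimately have "0 \<le> (SUP x\<in>{x. infnorm x = a}. GQ (f x) (g ((b / a) *\<^sub>R x)))"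
    using sup[OF p] by linarith
  then show ?thesis
    using ab size_f size_g lip_f lip_g Lf Lg sup unfolding lipschitz_AQ_def by unfold_locales auto
qed

theorem mainTheorem7:
  fixes Q :: nat
  shows "\<exists>C>0. \<forall>r \<sigma> (g :: pt \<Rightarrow> pt multiset) (f :: pt \<Rightarrow> pt multiset) Lg Lf.
    r > 0 \<longrightarrow> 0 < \<sigma> \<longrightarrow> \<sigma> < 1 \<longrightarrow>
    g ` frontier (sqD ((1 + \<sigma>) * r)) \<subseteq> AQ Q \<longrightarrow>
    f ` frontier (sqD r) \<subseteq> AQ Q \<longrightarrow>
    lipschitz_AQ (frontier (sqD ((1 + \<sigma>) * r))) g Lg \<longrightarrow>
    lipschitz_AQ (frontier (sqD r)) f Lf \<longrightarrow>
    (\<exists>h :: pt \<Rightarrow> pt multiset.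
       h ` (closure (sqD ((1 + \<sigma>) * r)) - sqD r) \<subseteq> AQ Q \<and>
       (\<forall>x\<in>frontier (sqD ((1 + \<sigma>) * r)). h x = g x) \<and>
       (\<forall>x\<in>frontier (sqD r). h x = f x) \<and>
       lipschitz_AQ (closure (sqD ((1 + \<sigma>) * r)) - sqD r) h
         (C * (Lf + Lg + (1 / (\<sigma> * r)) *
            (SUP x\<in>frontier (sqD r). GQ (f x) (g ((1 + \<sigma>) *\<^sub>R x))))))"
proof (intro exI[of _ "30 * cone_const Q"] conjI allI impI)
  show "0 < 30 * cone_const Q" using cone_const_pos[of Q] by simp
  fix r \<sigma> Lg Lf :: real and g f :: "pt \<Rightarrow> pt multiset"
  assume r: "r > 0" and \<sigma>: "0 < \<sigma>" "\<sigma> < 1"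
    and gA: "g ` frontier (sqD ((1 + \<sigma>) * r)) \<subseteq> AQ Q" and fA: "f ` frontier (sqD r) \<subseteq> AQ Q"
    and gL: "lipschitz_AQ (frontier (sqD ((1 + \<sigma>) * r))) g Lg" and fL: "lipschitz_AQ (frontier (sqD r)) f Lf"
  define a b \<delta> where "a = r / 2" and "b = (1 + \<sigma>) * r / 2"
    and "\<delta> = (SUP x\<in>frontier (sqD r). GQ (f x) (g ((1 + \<sigma>) *\<^sub>R x)))"
  have radii: "0 < a" "a < b" "b / a = 1 + \<sigma>" "b - a = \<sigma> * r / 2" using r \<sigma> by (auto simp: a_def b_def field_simps)
  have S: "frontier (sqD r) = {x. infnorm x = a}" "frontier (sqD ((1 + \<sigma>) * r)) = {x. infnorm x = b}"
    "closure (sqD ((1 + \<sigma>) * r)) - sqD r = {x. a \<le> infnorm x \<and> infnorm x \<le> b}"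
    using sqD_eq[of r] sqD_eq[of "(1 + \<sigma>) * r"] r \<sigma> by (auto simp: a_def b_def)
  interpret annulus_data a b Q f g Lf Lg \<delta>
    using annulus_data_intro[OF radii(1,2), of f Q g Lf Lg] fA gA fL gL unfolding S radii(3) \<delta>_def AQ_def by blast
  obtain h where h: "\<forall>x. infnorm x \<le> b \<longrightarrow> size (h x) = Q" "\<forall>x. infnorm x = b \<longrightarrow> h x = g x"
    "\<forall>x. infnorm x = a \<longrightarrow> h x = f x"
    "\<forall>x y. infnorm x \<le> b \<longrightarrow> infnorm y \<le> b \<longrightarrow> GQ (h x) (h y) \<le> 10 * cone_const Q * K0 * dist x y"
    using annulus_extension by blast
  have "\<delta> / (b - a) = 2 * (1 / (\<sigma> * r) * \<delta>)" "0 \<le> 1 / (\<sigma> * r) * \<delta>"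
    unfolding radii(4) using r \<sigma> nonneg by simp_all
  then have "K0 \<le> 3 * (Lf + Lg + 1 / (\<sigma> * r) * \<delta>)" using nonneg by (simp add: K0_def)
  then have "10 * cone_const Q * K0 \<le> 30 * cone_const Q * (Lf + Lg + 1 / (\<sigma> * r) * \<delta>)"
    using cone_const_pos[of Q] by simp
  then have "\<forall>x y. infnorm x \<le> b \<longrightarrow> infnorm y \<le> b \<longrightarrow>
      GQ (h x) (h y) \<le> 30 * cone_const Q * (Lf + Lg + 1 / (\<sigma> * r) * \<delta>) * dist x y"
    using h(4) by (meson order_trans mult_right_mono zero_le_dist)
  then show "\<exists>h. h ` (closure (sqD ((1 + \<sigma>) * r)) - sqD r) \<subseteq> AQ Q \<and>
      (\<forall>x\<in>frontier (sqD ((1 + \<sigma>) * r)). h x = g x) \<and> (\<forall>x\<in>frontier (sqD r). h x = f x) \<and>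
      lipschitz_AQ (closure (sqD ((1 + \<sigma>) * r)) - sqD r) h
        (30 * cone_const Q * (Lf + Lg + 1 / (\<sigma> * r) * (SUP x\<in>frontier (sqD r). GQ (f x) (g ((1 + \<sigma>) *\<^sub>R x)))))"
    using h(1-3) unfolding \<delta>_def[symmetric] unfolding S lipschitz_AQ_def AQ_def by (intro exI[of _ h]) auto
qed

end
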